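(* (a) Let $\alpha,\beta>0$, $\lambda\in\mathbb{R}$, $a,b>0$ with $-\min\{a,b\}<\frac{\lambda}{2}<\min\{a,b\}$. If $X\sim\mathrm{Be}'(\lambda,a,b;\alpha,1)$ and $Y\sim\mathrm{Be}'(-\lambda,a,b;\beta,1)$ are independent and $(U,V)=\tilde H_I^{\alpha,\beta}(X,Y)$, then $U,V$ are independent with $U\sim\mathrm{Be}'(\lambda,b,a;\alpha,1)$ and $V\sim\mathrm{Be}'(-\lambda,b,a;\beta,1)$. (b) Let $\delta>0$, $a,b>0$ and $0<\frac{\lambda}{2}<\min\{a,b\}$. If $X\sim\mathrm{Be}'(\lambda,a,b;\delta,1)$ and $Y\sim\mathrm{Be}'(b-\frac{\lambda}{2},\lambda)$ are independent and $(U,V)=F^{+,\delta}_{\mathrm{Be}}(X,Y)$, then $U,V$ are independent with $U\sim\mathrm{Be}'(\lambda,b,a;\delta,1)$ and $V\sim\mathrm{Be}'(a-\frac{\lambda}{2},\lambda)$.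
   Context: $\mathbb{R}_+=(0,\infty)$. For $p,q>0$ and $-b<\frac{\lambda}{2}<a$, $\mathrm{Be}'(\lambda,a,b;p,q)$ is the distribution on $\mathbb{R}_+$ with density proportional to $x^{\lambda-1}(1+px)^{-a-\frac{\lambda}{2}}(1+qx^{-1})^{-b+\frac{\lambda}{2}}$ (equivalently, $\mathrm{Be}'(\lambda,a,b;\delta,1)$ has density proportional to $x^{b+\frac{\lambda}{2}-1}(1+x)^{-b+\frac{\lambda}{2}}(1+\delta x)^{-a-\frac{\lambda}{2}}$). For $A,B>0$, $\mathrm{Be}'(A,B)$ is the Beta prime distribution with density proportional to $x^{A-1}(1+x)^{-A-B}$. $\tilde H_I^{\alpha,\beta}(x,y)=\left(\frac{1+x+y+\beta xy}{y(\beta+\alpha x+\beta y+\alpha\beta xy)},\ \frac{1+x+y+\alpha xy}{x(\alpha+\alpha x+\beta y+\alpha\beta xy)}\right)$ and $F^{+,\delta}_{\mathrm{Be}}(x,y)=\left(\frac{1+x+y}{\delta xy},\ \frac{1+x+y+\delta xy}{x(\delta+\delta x)}\right)$, maps $\mathbb{R}_+^2\to\mathbb{R}_+^2$. *)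

theory Defs
  imports "HOL-Probability.Probability"
begin

text \<open>Unnormalised density of the generalised Beta prime law Be'(lam,a,b;p,q) on (0,inf):
  x^(lam-1) (1+p x)^(-a-lam/2) (1+q/x)^(-b+lam/2) for x > 0, and 0 otherwise.\<close>
definition gbp_kernel :: "real \<Rightarrow> real \<Rightarrow> real \<Rightarrow> real \<Rightarrow> real \<Rightarrow> real \<Rightarrow> real" where
  "gbp_kernel lam a b p q x =
     (if 0 < x then x powr (lam - 1) * (1 + p * x) powr (- a - lam / 2)
                    * (1 + q / x) powr (- b + lam / 2) else 0)"

definition gbp_density :: "real \<Rightarrow> real \<Rightarrow> real \<Rightarrow> real \<Rightarrow> real \<Rightarrow> real \<Rightarrow> ennreal" where
  "gbp_density lam a b p q x =
     ennreal (gbp_kernel lam a b p q x / (\<integral>y. gbp_kernel lam a b p q y \<partial>lborel))"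

definition bp_kernel :: "real \<Rightarrow> real \<Rightarrow> real \<Rightarrow> real" where
  "bp_kernel A B x = (if 0 < x then x powr (A - 1) * (1 + x) powr (- A - B) else 0)"

definition bp_density :: "real \<Rightarrow> real \<Rightarrow> real \<Rightarrow> ennreal" where
  "bp_density A B x = ennreal (bp_kernel A B x / (\<integral>y. bp_kernel A B y \<partial>lborel))"

definition HI :: "real \<Rightarrow> real \<Rightarrow> real \<Rightarrow> real \<Rightarrow> real \<times> real" where
  "HI \<alpha> \<beta> x y =
     ((1 + x + y + \<beta> * x * y) / (y * (\<beta> + \<alpha> * x + \<beta> * y + \<alpha> * \<beta> * x * y)),
      (1 + x + y + \<alpha> * x * y) / (x * (\<alpha> + \<alpha> * x + \<beta> * y + \<alpha> * \<beta> * x * y)))"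

definition FBe :: "real \<Rightarrow> real \<Rightarrow> real \<Rightarrow> real \<times> real" where
  "FBe \<delta> x y =
     ((1 + x + y) / (\<delta> * x * y),
      (1 + x + y + \<delta> * x * y) / (x * (\<delta> + \<delta> * x)))"

end

theory Submission
  imports Defs
begin

(*
  The maps HI and FBe are bijections of the open positive quadrant whose Jacobian turns the product
  of the two input kernels into the product of the two output kernels; this identity is checked by
  comparing logarithms. Both maps are triangular: the second coordinate v is a Moebius function of y
  for fixed x, and the first coordinate is a Moebius function of x for fixed v. Hence the planar change
  of variables reduces, via Fubini, to two one-dimensional substitutions. The transformed joint density
  is again a product, which gives independence and, after normalisation, the two marginal laws.
  For alpha = beta the map HI degenerates to (x, y) |-> (1/(alpha y), 1/(alpha x)), a coordinate swap
  followed by a triangular map, and is treated separately.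
*)

lemma fst_borel_measurable[measurable]: "fst \<in> borel_measurable (borel :: (real \<times> real) measure)"
  using measurable_fst[of "borel :: real measure" "borel :: real measure"] by (simp only: borel_prod)

lemma snd_borel_measurable[measurable]: "snd \<in> borel_measurable (borel :: (real \<times> real) measure)"
  using measurable_snd[of "borel :: real measure" "borel :: real measure"] by (simp only: borel_prod)

definition normalized_density :: "(real \<Rightarrow> real) \<Rightarrow> real \<Rightarrow> ennreal" where
  "normalized_density K x = ennreal (K x / (\<integral>y. K y \<partial>lborel))"

lemma gbp_density_eq_normalized: "gbp_density lam a b p q = normalized_density (gbp_kernel lam a b p q)"
  by (simp add: fun_eq_iff gbp_density_def normalized_density_def)

lemma bp_density_eq_normalized: "bp_density A B = normalized_density (bp_kernel A B)"
  by (simp add: fun_eq_iff bp_density_def normalized_density_def)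

lemma distr_cong_sets:
  assumes "sets N = sets N'"
  shows "distr M N f = distr M N' f"
  unfolding distr_def using assms sets_eq_imp_space_eq[OF assms] by simp

lemma (in prob_space) nn_integral_density_eq_1:
  assumes X: "distributed M N X f"
  shows "(\<integral>\<^sup>+x. f x \<partial>N) = 1"
proof -
  have f: "f \<in> borel_measurable N"
    using X by (simp add: distributed_def)
  have "prob_space (density N f)"
    using prob_space_distr[of X N] X by (simp add: distributed_def)
  then have "1 = emeasure (density N f) (space N)"
    using prob_space.emeasure_space_1[of "density N f"] by simp
  also have "\<dots> = (\<integral>\<^sup>+x. f x * indicator (space N) x \<partial>N)"
    by (rule emeasure_density[OF f sets.top])
  also have "\<dots> = (\<integral>\<^sup>+x. f x \<partial>N)"
    by (rule nn_integral_cong) simp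
  finally show ?thesis by (rule sym)
qed

\<comment> \<open>A zero normaliser would make the normalized density vanish identically, as \<open>x / 0 = 0\<close>.\<close>
lemma (in prob_space) normalizer_pos_if_distributed:
  assumes X: "distributed M lborel X (normalized_density K)" and nn: "\<And>x. 0 \<le> K x"
  shows "0 < (\<integral>y. K y \<partial>lborel)"
proof (rule ccontr)
  assume "\<not> 0 < (\<integral>y. K y \<partial>lborel)"
  moreover have "0 \<le> (\<integral>y. K y \<partial>lborel)"
    using nn by (simp add: Bochner_Integration.integral_nonneg)
  ultimately have "(\<integral>y. K y \<partial>lborel) = 0" by simp
  then have "normalized_density K = (\<lambda>_. 0)"
    by (simp add: fun_eq_iff normalized_density_def)
  then show False
    using nn_integral_density_eq_1[OF X] by simp
qed

lemma (in prob_space) distributed_pushforward: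
  fixes Z :: "'a \<Rightarrow> real \<times> real" and T :: "real \<times> real \<Rightarrow> real \<times> real"
  assumes Z: "distributed M lborel Z f"
    and T[measurable]: "T \<in> borel_measurable borel" and g[measurable]: "g \<in> borel_measurable borel"
    and transfer: "\<And>C. C \<in> sets borel \<Longrightarrow>
      (\<integral>\<^sup>+z. f z * indicator C (T z) \<partial>lborel) = (\<integral>\<^sup>+z. g z * indicator C z \<partial>lborel)"
  shows "distributed M lborel (\<lambda>\<omega>. T (Z \<omega>)) g"
proof -
  have [measurable]: "Z \<in> measurable M borel" "f \<in> borel_measurable borel"
    using Z by (auto simp: distributed_def)
  have "distr M lborel (\<lambda>\<omega>. T (Z \<omega>)) = distr (distr M lborel Z) lborel T"
    by (subst distr_distr) (auto simp: comp_def)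
  also have "\<dots> = distr (density lborel f) lborel T"
    by (simp add: distributed_distr_eq_density[OF Z])
  also have "\<dots> = density lborel g"
  proof (rule measure_eqI)
    fix C assume "C \<in> sets (distr (density lborel f) lborel T)"
    then have C[measurable]: "C \<in> sets borel" by simp
    have [measurable]: "T -` C \<in> sets borel"
      using measurable_sets[of T borel borel C] by simp
    have "emeasure (distr (density lborel f) lborel T) C = emeasure (density lborel f) (T -` C)"
      using emeasure_distr[of T "density lborel f" lborel C] T by simp
    also have "\<dots> = (\<integral>\<^sup>+z. f z * indicator C (T z) \<partial>lborel)"
      by (subst emeasure_density) (auto intro!: nn_integral_cong split: split_indicator)
    also have "\<dots> = emeasure (density lborel g) C"
      by (simp add: transfer emeasure_density)
    finally show "emeasure (distr (density lborel f) lborel T) C = emeasure (density lborel g) C" .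
  next
    show "sets (distr (density lborel f) lborel T) = sets (density lborel g)"
      by (simp only: sets_distr sets_density)
  qed
  finally have "distr M lborel (\<lambda>\<omega>. T (Z \<omega>)) = density lborel g" .
  moreover have "(\<lambda>\<omega>. T (Z \<omega>)) \<in> measurable M lborel"
    using measurable_compose[of Z M borel T borel] by simp
  moreover have "g \<in> borel_measurable lborel"
    using g by simp
  ultimately show ?thesis
    unfolding distributed_def by blast
qed


lemma (in prob_space) distributed_scaled_kernel_normalized:
  assumes X: "distributed M lborel X (\<lambda>x. ennreal (k * K x))"
    and [measurable]: "K \<in> borel_measurable borel"
    and nn: "\<And>x. 0 \<le> K x" and k: "0 \<le> k"
  shows "distributed M lborel X (normalized_density K)"
proof -
  have "ennreal k * (\<integral>\<^sup>+x. ennreal (K x) \<partial>lborel) = (\<integral>\<^sup>+x. ennreal k * ennreal (K x) \<partial>lborel)"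
    by (rule nn_integral_cmult[symmetric]) simp
  also have "\<dots> = (\<integral>\<^sup>+x. ennreal (k * K x) \<partial>lborel)"
    using k nn by (simp add: ennreal_mult)
  also have "\<dots> = 1"
    by (rule nn_integral_density_eq_1[OF X])
  finally have mass: "ennreal k * (\<integral>\<^sup>+x. ennreal (K x) \<partial>lborel) = 1" .
  then have "(\<integral>\<^sup>+x. ennreal (K x) \<partial>lborel) \<noteq> \<top>"
    by (cases "ennreal k = 0") (auto simp: ennreal_mult_top)
  then have int: "integrable lborel K"
    using nn by (intro integrableI_nonneg) (auto simp: less_top)
  have "ennreal (k * (\<integral>x. K x \<partial>lborel)) = 1"
    using mass nn k by (simp add: nn_integral_eq_integral[OF int] ennreal_mult Bochner_Integration.integral_nonneg)
  then have kZ: "k * (\<integral>x. K x \<partial>lborel) = 1"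
    using k nn by (simp add: Bochner_Integration.integral_nonneg)
  then have "(\<integral>x. K x \<partial>lborel) \<noteq> 0"
    by auto
  with kZ have "k = 1 / (\<integral>x. K x \<partial>lborel)"
    by (simp add: field_simps)
  then have "(\<lambda>x. ennreal (k * K x)) = normalized_density K"
    by (simp add: fun_eq_iff normalized_density_def)
  then show ?thesis
    using X by simp
qed

lemma (in prob_space) distributed_marginals_of_product_kernel:
  fixes U V :: "'a \<Rightarrow> real" and KU KV :: "real \<Rightarrow> real" and c :: real
  assumes [measurable]: "KU \<in> borel_measurable borel" "KV \<in> borel_measurable borel"
    and nnU: "\<And>u. 0 \<le> KU u" and nnV: "\<And>v. 0 \<le> KV v" and c: "0 \<le> c"
    and UV: "distributed M lborel (\<lambda>\<omega>. (U \<omega>, V \<omega>)) (\<lambda>z. ennreal (c * KU (fst z) * KV (snd z)))"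
  shows "distributed M lborel U (\<lambda>u. ennreal (c * KU u) * (\<integral>\<^sup>+v. ennreal (KV v) \<partial>lborel))"
    and "distributed M lborel V (\<lambda>v. ennreal (c * KV v) * (\<integral>\<^sup>+u. ennreal (KU u) \<partial>lborel))"
proof -
  have sf: "sigma_finite_measure (lborel :: real measure)"
    by (rule lborel.sigma_finite_measure_axioms)
  have UV2: "distributed M (lborel \<Otimes>\<^sub>M lborel) (\<lambda>\<omega>. (U \<omega>, V \<omega>)) (\<lambda>(u, v). ennreal (c * KU u * KV v))"
    using UV by (simp add: lborel_prod case_prod_beta')
  have "(\<integral>\<^sup>+v. ennreal (c * KU u * KV v) \<partial>lborel) = (\<integral>\<^sup>+v. ennreal (c * KU u) * ennreal (KV v) \<partial>lborel)"
      "(\<integral>\<^sup>+u. ennreal (c * KU u * KV v) \<partial>lborel) = (\<integral>\<^sup>+u. ennreal (c * KV v) * ennreal (KU u) \<partial>lborel)"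
    for u v
    using c nnU nnV by (simp_all add: ennreal_mult[symmetric] mult_ac)
  moreover have "(\<integral>\<^sup>+v. ennreal (c * KU u) * ennreal (KV v) \<partial>lborel) = ennreal (c * KU u) * (\<integral>\<^sup>+v. ennreal (KV v) \<partial>lborel)"
      "(\<integral>\<^sup>+u. ennreal (c * KV v) * ennreal (KU u) \<partial>lborel) = ennreal (c * KV v) * (\<integral>\<^sup>+u. ennreal (KU u) \<partial>lborel)"
    for u v
    by (rule nn_integral_cmult; simp)+
  ultimately show "distributed M lborel U (\<lambda>u. ennreal (c * KU u) * (\<integral>\<^sup>+v. ennreal (KV v) \<partial>lborel))"
    and "distributed M lborel V (\<lambda>v. ennreal (c * KV v) * (\<integral>\<^sup>+u. ennreal (KU u) \<partial>lborel))"
    using distr_marginal1[OF sf sf UV2] distr_marginal2[OF sf sf UV2] by simp_all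
qed

lemma (in prob_space) indep_var_if_product_density:
  fixes U V :: "'a \<Rightarrow> real" and KU KV :: "real \<Rightarrow> real" and c :: real
  assumes mU[measurable]: "KU \<in> borel_measurable borel" and mV[measurable]: "KV \<in> borel_measurable borel"
    and nnU: "\<And>u. 0 \<le> KU u" and nnV: "\<And>v. 0 \<le> KV v" and c: "0 \<le> c"
    and UV: "distributed M lborel (\<lambda>\<omega>. (U \<omega>, V \<omega>)) (\<lambda>z. ennreal (c * KU (fst z) * KV (snd z)))"
  shows "indep_var borel U borel V \<and>
    distributed M lborel U (normalized_density KU) \<and> distributed M lborel V (normalized_density KV)"
proof -
  define NU where "NU = (\<integral>\<^sup>+u. ennreal (KU u) \<partial>lborel)"
  define NV where "NV = (\<integral>\<^sup>+v. ennreal (KV v) \<partial>lborel)"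
  have margU: "distributed M lborel U (\<lambda>u. ennreal (c * KU u) * NV)"
    and margV: "distributed M lborel V (\<lambda>v. ennreal (c * KV v) * NU)"
    unfolding NU_def NV_def by (rule distributed_marginals_of_product_kernel[OF mU mV nnU nnV c UV])+
  have "1 = (\<integral>\<^sup>+u. ennreal (c * KU u) * NV \<partial>lborel)"
    using nn_integral_density_eq_1[OF margU] by simp
  also have "\<dots> = (\<integral>\<^sup>+u. ennreal c * ennreal (KU u) \<partial>lborel) * NV"
    using c nnU by (simp add: ennreal_mult nn_integral_multc)
  also have "\<dots> = ennreal c * NU * NV"
    unfolding NU_def by (subst nn_integral_cmult) auto
  finally have mass: "ennreal c * NU * NV = 1" ..
  then have "ennreal c \<noteq> 0" "NU \<noteq> 0" "NV \<noteq> 0" "ennreal c * NU * NV \<noteq> \<top>"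
    by auto
  then have "NU \<noteq> \<top>" "NV \<noteq> \<top>"
    by (auto simp: ennreal_mult_eq_top_iff)
  then obtain zu zv where zu: "NU = ennreal zu" "0 \<le> zu" and zv: "NV = ennreal zv" "0 \<le> zv"
    by (metis ennreal_cases)
  have "distributed M lborel U (\<lambda>u. ennreal (c * zv * KU u))"
    using margU c zv nnU by (simp add: ennreal_mult[symmetric] mult_ac)
  then have distU: "distributed M lborel U (normalized_density KU)"
    by (rule distributed_scaled_kernel_normalized[OF _ mU nnU]) (use c zv in simp)
  have "distributed M lborel V (\<lambda>v. ennreal (c * zu * KV v))"
    using margV c zu nnV by (simp add: ennreal_mult[symmetric] mult_ac)
  then have distV: "distributed M lborel V (normalized_density KV)"
    by (rule distributed_scaled_kernel_normalized[OF _ mV nnV]) (use c zu in simp)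
  interpret DV: prob_space "density lborel (\<lambda>v. ennreal (c * KV v) * NU)"
    using prob_space_distr[of V lborel] margV by (simp add: distributed_def)
  have "distr M borel U \<Otimes>\<^sub>M distr M borel V = density lborel (\<lambda>u. ennreal (c * KU u) * NV) \<Otimes>\<^sub>M density lborel (\<lambda>v. ennreal (c * KV v) * NU)"
    using margU margV by (simp add: distr_cong_sets[of borel lborel] distributed_distr_eq_density)
  also have "\<dots> = density (lborel \<Otimes>\<^sub>M lborel) (\<lambda>(u, v). (ennreal (c * KU u) * NV) * (ennreal (c * KV v) * NU))"
    by (intro pair_measure_density) (auto intro: lborel.sigma_finite_measure_axioms DV.sigma_finite_measure_axioms)
  also have "\<dots> = density (lborel \<Otimes>\<^sub>M lborel) (\<lambda>(u, v). ennreal (c * KU u * KV v))"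
  proof -
    have "(ennreal (c * KU u) * NV) * (ennreal (c * KV v) * NU) = ennreal (c * KU u * KV v) * (ennreal c * NU * NV)" for u v
      using c nnU nnV by (simp add: ennreal_mult mult_ac)
    then show ?thesis
      by (simp add: mass)
  qed
  also have "\<dots> = distr M (lborel \<Otimes>\<^sub>M lborel) (\<lambda>\<omega>. (U \<omega>, V \<omega>))"
    using distributed_distr_eq_density[OF UV] by (simp add: lborel_prod case_prod_beta')
  also have "\<dots> = distr M (borel \<Otimes>\<^sub>M borel) (\<lambda>\<omega>. (U \<omega>, V \<omega>))"
    by (rule distr_cong_sets) (simp add: borel_prod lborel_prod)
  finally have "indep_var borel U borel V"
    using margU margV by (simp add: indep_var_distribution_eq distributed_def)
  then show ?thesis
    using distU distV by blast
qed

lemma (in prob_space) indep_var_of_kernel_transfer: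
  fixes X Y :: "'a \<Rightarrow> real" and T :: "real \<Rightarrow> real \<Rightarrow> real \<times> real"
    and KX KY KU KV :: "real \<Rightarrow> real"
  assumes [measurable]: "KX \<in> borel_measurable borel" "KY \<in> borel_measurable borel"
      "KU \<in> borel_measurable borel" "KV \<in> borel_measurable borel"
      "(\<lambda>z. T (fst z) (snd z)) \<in> borel_measurable borel"
    and nnX: "\<And>x. 0 \<le> KX x" and nnY: "\<And>y. 0 \<le> KY y"
    and nnU: "\<And>u. 0 \<le> KU u" and nnV: "\<And>v. 0 \<le> KV v"
    and X: "distributed M lborel X (normalized_density KX)"
    and Y: "distributed M lborel Y (normalized_density KY)"
    and indep: "indep_var borel X borel Y"
    and transfer: "\<And>C. C \<in> sets borel \<Longrightarrow>
      (\<integral>\<^sup>+z. ennreal (KX (fst z) * KY (snd z)) * indicator C (T (fst z) (snd z)) \<partial>lborel) =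
      (\<integral>\<^sup>+z. ennreal (KU (fst z) * KV (snd z)) * indicator C z \<partial>lborel)"
  shows "indep_var borel (\<lambda>\<omega>. fst (T (X \<omega>) (Y \<omega>))) borel (\<lambda>\<omega>. snd (T (X \<omega>) (Y \<omega>))) \<and>
    distributed M lborel (\<lambda>\<omega>. fst (T (X \<omega>) (Y \<omega>))) (normalized_density KU) \<and>
    distributed M lborel (\<lambda>\<omega>. snd (T (X \<omega>) (Y \<omega>))) (normalized_density KV)"
proof -
  define c where "c = 1 / ((\<integral>x. KX x \<partial>lborel) * (\<integral>y. KY y \<partial>lborel))"
  have ZX: "0 < (\<integral>x. KX x \<partial>lborel)" and ZY: "0 < (\<integral>y. KY y \<partial>lborel)"
    using normalizer_pos_if_distributed X Y nnX nnY by auto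
  then have c: "0 \<le> c"
    by (simp add: c_def)
  have "distr M lborel X \<Otimes>\<^sub>M distr M lborel Y = distr M (lborel \<Otimes>\<^sub>M lborel) (\<lambda>\<omega>. (X \<omega>, Y \<omega>))"
  proof -
    have "distr M borel X \<Otimes>\<^sub>M distr M borel Y = distr M (borel \<Otimes>\<^sub>M borel) (\<lambda>\<omega>. (X \<omega>, Y \<omega>))"
      using indep by (simp add: indep_var_distribution_eq)
    moreover have "distr M (borel \<Otimes>\<^sub>M borel) (\<lambda>\<omega>. (X \<omega>, Y \<omega>)) = distr M (lborel \<Otimes>\<^sub>M lborel) (\<lambda>\<omega>. (X \<omega>, Y \<omega>))"
      by (rule distr_cong_sets) (simp add: borel_prod lborel_prod)
    moreover have "distr M borel X = distr M lborel X" "distr M borel Y = distr M lborel Y"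
      by (rule distr_cong_sets; simp)+
    ultimately show ?thesis
      by simp
  qed
  then have "distributed M (lborel \<Otimes>\<^sub>M lborel) (\<lambda>\<omega>. (X \<omega>, Y \<omega>))
      (\<lambda>(x, y). normalized_density KX x * normalized_density KY y)"
    by (intro distributed_joint_indep' X Y lborel.sigma_finite_measure_axioms)
  moreover have "normalized_density KX x * normalized_density KY y = ennreal (c * (KX x * KY y))" for x y
    using ZX ZY nnX nnY by (simp add: normalized_density_def c_def ennreal_mult[symmetric])
  ultimately have XY: "distributed M lborel (\<lambda>\<omega>. (X \<omega>, Y \<omega>)) (\<lambda>z. ennreal (c * (KX (fst z) * KY (snd z))))"
    by (simp add: lborel_prod case_prod_beta')
  have transfer_scaled: "(\<integral>\<^sup>+z. ennreal (c * (KX (fst z) * KY (snd z))) * indicator C (T (fst z) (snd z)) \<partial>lborel) =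
      (\<integral>\<^sup>+z. ennreal (c * KU (fst z) * KV (snd z)) * indicator C z \<partial>lborel)" if C: "C \<in> sets borel" for C
  proof -
    have "(\<integral>\<^sup>+z. ennreal (c * (KX (fst z) * KY (snd z))) * indicator C (T (fst z) (snd z)) \<partial>lborel) =
        ennreal c * (\<integral>\<^sup>+z. ennreal (KX (fst z) * KY (snd z)) * indicator C (T (fst z) (snd z)) \<partial>lborel)"
      using c nnX nnY C by (subst nn_integral_cmult[symmetric]) (auto simp: ennreal_mult mult.assoc)
    also have "\<dots> = ennreal c * (\<integral>\<^sup>+z. ennreal (KU (fst z) * KV (snd z)) * indicator C z \<partial>lborel)"
      by (simp add: transfer[OF C])
    also have "\<dots> = (\<integral>\<^sup>+z. ennreal (c * KU (fst z) * KV (snd z)) * indicator C z \<partial>lborel)"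
      using c nnU nnV C by (subst nn_integral_cmult[symmetric]) (auto simp: ennreal_mult mult.assoc)
    finally show ?thesis .
  qed
  have "(\<lambda>z. ennreal (c * KU (fst z) * KV (snd z))) \<in> borel_measurable borel"
    by measurable
  from distributed_pushforward[OF XY _ this transfer_scaled]
  have "distributed M lborel (\<lambda>\<omega>. T (X \<omega>) (Y \<omega>)) (\<lambda>z. ennreal (c * KU (fst z) * KV (snd z)))"
    unfolding fst_conv snd_conv by simp
  then show ?thesis
    using indep_var_if_product_density[of KU KV c "\<lambda>\<omega>. fst (T (X \<omega>) (Y \<omega>))" "\<lambda>\<omega>. snd (T (X \<omega>) (Y \<omega>))"] nnU nnV c
    by simp
qed

lemma set_nn_integral_eq_ennreal_iff:
  fixes h :: "real \<Rightarrow> real"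
  assumes nn: "\<And>x. 0 \<le> h x" and [measurable]: "(\<lambda>x. h x * indicator S x) \<in> borel_measurable borel"
  shows "(\<integral>\<^sup>+x. ennreal (h x) * indicator S x \<partial>lborel) = ennreal r \<and> 0 \<le> r \<longleftrightarrow>
    h absolutely_integrable_on S \<and> integral S h = r"
proof
  assume r: "(\<integral>\<^sup>+x. ennreal (h x) * indicator S x \<partial>lborel) = ennreal r \<and> 0 \<le> r"
  have "(\<integral>\<^sup>+x. ennreal (h x * indicator S x) \<partial>lborel) = (\<integral>\<^sup>+x. ennreal (h x) * indicator S x \<partial>lborel)"
    by (intro nn_integral_cong) (auto simp: indicator_def)
  then have "(\<integral>\<^sup>+x. ennreal (h x * indicator S x) \<partial>lborel) = ennreal r"
    using r by simp
  then have "((\<lambda>x. h x * indicator S x) has_integral r) UNIV"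
    using r nn by (subst has_integral_iff_nn_integral_lebesgue)
      (auto simp: nn_integral_completion measurable_completion)
  moreover have "(\<lambda>x. h x * indicator S x) = (\<lambda>x. if x \<in> S then h x else 0)"
    by (auto simp: indicator_def)
  ultimately have "(h has_integral r) S"
    by (simp add: has_integral_restrict_UNIV)
  then show "h absolutely_integrable_on S \<and> integral S h = r"
    using nn nonnegative_absolutely_integrable_1 has_integral_integrable integral_unique by blast
next
  assume h: "h absolutely_integrable_on S \<and> integral S h = r"
  then have "(h has_integral r) S"
    using set_lebesgue_integral_eq_integral(1) has_integral_integral by fastforce
  then show "(\<integral>\<^sup>+x. ennreal (h x) * indicator S x \<partial>lborel) = ennreal r \<and> 0 \<le> r"
    using nn by (auto intro: nn_integral_has_integral_lebesgue' has_integral_nonneg)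
qed

lemma nn_integral_substitution_inj_on:
  fixes g g' f :: "real \<Rightarrow> real" and S :: "real set"
  assumes S: "S \<in> sets lebesgue"
    and der: "\<And>y. y \<in> S \<Longrightarrow> (g has_real_derivative g' y) (at y within S)"
    and inj: "inj_on g S"
    and nn: "\<And>y. 0 \<le> f y"
    and [measurable]: "(\<lambda>y. \<bar>g' y\<bar> * f (g y) * indicator S y) \<in> borel_measurable borel"
      "(\<lambda>y. f y * indicator (g ` S) y) \<in> borel_measurable borel"
  shows "(\<integral>\<^sup>+y. ennreal (\<bar>g' y\<bar> * f (g y)) * indicator S y \<partial>lborel) =
    (\<integral>\<^sup>+v. ennreal (f v) * indicator (g ` S) v \<partial>lborel)" (is "?L = ?R")
proof -
  have iff: "?L = ennreal r \<and> 0 \<le> r \<longleftrightarrow> ?R = ennreal r \<and> 0 \<le> r" for r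
    using has_absolute_integral_change_of_variables_1'[OF S der inj, of f r] nn
    by (simp add: set_nn_integral_eq_ennreal_iff)
  show ?thesis
  proof (cases ?L rule: ennreal_cases)
    case (real r)
    then show ?thesis
      using iff[of r] by simp
  next
    case top
    show ?thesis
    proof (cases ?R rule: ennreal_cases)
      case (real r)
      then show ?thesis
        using iff[of r] top by simp
    qed (use top in simp)
  qed
qed

lemma slice_sets_lebesgue:
  assumes "A \<in> sets (borel :: (real \<times> real) measure)"
  shows "{y. (x, y) \<in> A} \<in> sets lebesgue"
proof -
  have "A \<in> sets (borel \<Otimes>\<^sub>M borel)"
    using assms by (simp only: borel_prod)
  then have "Pair x -` A \<in> sets borel"
    using sets_Pair1 by simp
  then show ?thesis
    by (simp add: sets_completionI_sets vimage_def)
qed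

lemma nn_integral_swap_lborel:
  fixes F :: "real \<times> real \<Rightarrow> ennreal"
  assumes [measurable]: "F \<in> borel_measurable borel"
  shows "(\<integral>\<^sup>+z. F z \<partial>lborel) = (\<integral>\<^sup>+z. F (snd z, fst z) \<partial>lborel)"
proof -
  have "(\<integral>\<^sup>+z. F z \<partial>lborel) = (\<integral>\<^sup>+y. \<integral>\<^sup>+x. F (x, y) \<partial>lborel \<partial>lborel)"
    using lborel_pair.nn_integral_snd[of F] by (simp add: lborel_prod)
  also have "\<dots> = (\<integral>\<^sup>+z. F (snd z, fst z) \<partial>lborel)"
    using lborel.nn_integral_fst[of "\<lambda>z. F (snd z, fst z)"] by (simp add: lborel_prod)
  finally show ?thesis .
qed

lemma nn_integral_substitution_snd:
  fixes G G' :: "real \<Rightarrow> real \<Rightarrow> real" and A B :: "(real \<times> real) set" and \<phi> :: "real \<times> real \<Rightarrow> real"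
  assumes A[measurable]: "A \<in> sets borel" and [measurable]: "B \<in> sets borel" "\<phi> \<in> borel_measurable borel"
      "(\<lambda>z. G (fst z) (snd z)) \<in> borel_measurable borel" "(\<lambda>z. G' (fst z) (snd z)) \<in> borel_measurable borel"
    and nn: "\<And>z. 0 \<le> \<phi> z"
    and der: "\<And>x y. (x, y) \<in> A \<Longrightarrow> (G x has_real_derivative G' x y) (at y)"
    and inj: "\<And>x. inj_on (G x) {y. (x, y) \<in> A}"
    and img: "\<And>x. G x ` {y. (x, y) \<in> A} = {v. (x, v) \<in> B}"
  shows "(\<integral>\<^sup>+z. ennreal (\<phi> (fst z, G (fst z) (snd z)) * \<bar>G' (fst z) (snd z)\<bar>) * indicator A z \<partial>lborel) =
    (\<integral>\<^sup>+z. ennreal (\<phi> z) * indicator B z \<partial>lborel)"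
proof -
  have fibre: "(\<integral>\<^sup>+y. ennreal (\<phi> (x, G x y) * \<bar>G' x y\<bar>) * indicator A (x, y) \<partial>lborel) =
      (\<integral>\<^sup>+v. ennreal (\<phi> (x, v)) * indicator B (x, v) \<partial>lborel)" for x
  proof -
    let ?S = "{y. (x, y) \<in> A}"
    have indA: "indicator ?S y = indicator A (x, y)" for y :: real
      by (simp add: indicator_def)
    have indB: "indicator (G x ` ?S) v = indicator B (x, v)" for v :: real
      by (simp add: img indicator_def)
    have "(\<integral>\<^sup>+y. ennreal (\<bar>G' x y\<bar> * \<phi> (x, G x y)) * indicator ?S y \<partial>lborel) =
        (\<integral>\<^sup>+v. ennreal (\<phi> (x, v)) * indicator (G x ` ?S) v \<partial>lborel)"
    proof (rule nn_integral_substitution_inj_on[OF slice_sets_lebesgue[OF A] _ inj nn])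
      show "(G x has_real_derivative G' x y) (at y within ?S)" if "y \<in> ?S" for y
        using der that by (auto intro: has_field_derivative_at_within)
      have "(\<lambda>y. \<bar>G' (fst (x, y)) (snd (x, y))\<bar> * \<phi> (fst (x, y), G (fst (x, y)) (snd (x, y)))
          * indicator A (x, y)) \<in> borel_measurable borel"
        by measurable
      then show "(\<lambda>y. \<bar>G' x y\<bar> * \<phi> (x, G x y) * indicator ?S y) \<in> borel_measurable borel"
        by (simp add: indA)
      show "(\<lambda>v. \<phi> (x, v) * indicator (G x ` ?S) v) \<in> borel_measurable borel"
        unfolding indB by measurable
    qed
    then show ?thesis
      by (simp add: indA indB mult.commute)
  qed
  have "(\<integral>\<^sup>+z. ennreal (\<phi> (fst z, G (fst z) (snd z)) * \<bar>G' (fst z) (snd z)\<bar>) * indicator A z \<partial>lborel) =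
      (\<integral>\<^sup>+x. \<integral>\<^sup>+y. ennreal (\<phi> (x, G x y) * \<bar>G' x y\<bar>) * indicator A (x, y) \<partial>lborel \<partial>lborel)"
    using lborel.nn_integral_fst[of "\<lambda>z. ennreal (\<phi> (fst z, G (fst z) (snd z)) * \<bar>G' (fst z) (snd z)\<bar>) * indicator A z"]
    by (simp add: lborel_prod)
  also have "\<dots> = (\<integral>\<^sup>+x. \<integral>\<^sup>+v. ennreal (\<phi> (x, v)) * indicator B (x, v) \<partial>lborel \<partial>lborel)"
    by (simp add: fibre)
  also have "\<dots> = (\<integral>\<^sup>+z. ennreal (\<phi> z) * indicator B z \<partial>lborel)"
    using lborel.nn_integral_fst[of "\<lambda>z. ennreal (\<phi> z) * indicator B z"] by (simp add: lborel_prod)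
  finally show ?thesis .
qed

lemma nn_integral_substitution_fst:
  fixes G G' :: "real \<Rightarrow> real \<Rightarrow> real" and A B :: "(real \<times> real) set" and \<phi> :: "real \<times> real \<Rightarrow> real"
  assumes [measurable]: "A \<in> sets borel" "B \<in> sets borel" "\<phi> \<in> borel_measurable borel"
      "(\<lambda>z. G (snd z) (fst z)) \<in> borel_measurable borel" "(\<lambda>z. G' (snd z) (fst z)) \<in> borel_measurable borel"
    and nn: "\<And>z. 0 \<le> \<phi> z"
    and der: "\<And>x y. (x, y) \<in> A \<Longrightarrow> (G y has_real_derivative G' y x) (at x)"
    and inj: "\<And>y. inj_on (G y) {x. (x, y) \<in> A}"
    and img: "\<And>y. G y ` {x. (x, y) \<in> A} = {u. (u, y) \<in> B}"
  shows "(\<integral>\<^sup>+z. ennreal (\<phi> (G (snd z) (fst z), snd z) * \<bar>G' (snd z) (fst z)\<bar>) * indicator A z \<partial>lborel) =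
    (\<integral>\<^sup>+z. ennreal (\<phi> z) * indicator B z \<partial>lborel)"
proof -
  let ?swap = "\<lambda>z :: real \<times> real. (snd z, fst z)"
  have [measurable]: "?swap -` A \<in> sets borel" "?swap -` B \<in> sets borel"
    using measurable_sets[of ?swap borel borel] by (simp_all add: measurable_Pair)
  have "(\<lambda>z. G (snd (?swap z)) (fst (?swap z))) \<in> borel_measurable borel"
    "(\<lambda>z. G' (snd (?swap z)) (fst (?swap z))) \<in> borel_measurable borel"
    by measurable
  then have [measurable]: "(\<lambda>z. G (fst z) (snd z)) \<in> borel_measurable borel"
    "(\<lambda>z. G' (fst z) (snd z)) \<in> borel_measurable borel"
    by simp_all
  have "(\<integral>\<^sup>+z. ennreal (\<phi> (G (snd z) (fst z), snd z) * \<bar>G' (snd z) (fst z)\<bar>) * indicator A z \<partial>lborel) =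
      (\<integral>\<^sup>+z. ennreal (\<phi> (G (fst z) (snd z), fst z) * \<bar>G' (fst z) (snd z)\<bar>) * indicator (?swap -` A) z \<partial>lborel)"
    by (subst nn_integral_swap_lborel) (simp_all add: indicator_def)
  also have "\<dots> = (\<integral>\<^sup>+z. ennreal (\<phi> (?swap z)) * indicator (?swap -` B) z \<partial>lborel)"
    by (rule nn_integral_substitution_snd[where \<phi> = "\<lambda>z. \<phi> (snd z, fst z)", unfolded fst_conv snd_conv])
      (use nn der inj img in auto)
  also have "\<dots> = (\<integral>\<^sup>+z. ennreal (\<phi> z) * indicator B z \<partial>lborel)"
    by (subst nn_integral_swap_lborel) (simp_all add: indicator_def)
  finally show ?thesis .
qed

lemma nn_integral_triangular_substitution:
  fixes H H' G G' :: "real \<Rightarrow> real \<Rightarrow> real" and A B C :: "(real \<times> real) set"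
    and \<phi> :: "real \<times> real \<Rightarrow> real"
  assumes [measurable]: "A \<in> sets borel" "B \<in> sets borel" "C \<in> sets borel" "\<phi> \<in> borel_measurable borel"
      "(\<lambda>z. H (fst z) (snd z)) \<in> borel_measurable borel" "(\<lambda>z. H' (fst z) (snd z)) \<in> borel_measurable borel"
      "(\<lambda>z. G (snd z) (fst z)) \<in> borel_measurable borel" "(\<lambda>z. G' (snd z) (fst z)) \<in> borel_measurable borel"
    and nn: "\<And>z. 0 \<le> \<phi> z"
    and derH: "\<And>x y. (x, y) \<in> A \<Longrightarrow> (H x has_real_derivative H' x y) (at y)"
    and injH: "\<And>x. inj_on (H x) {y. (x, y) \<in> A}"
    and imgH: "\<And>x. H x ` {y. (x, y) \<in> A} = {v. (x, v) \<in> B}"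
    and derG: "\<And>x v. (x, v) \<in> B \<Longrightarrow> (G v has_real_derivative G' v x) (at x)"
    and injG: "\<And>v. inj_on (G v) {x. (x, v) \<in> B}"
    and imgG: "\<And>v. G v ` {x. (x, v) \<in> B} = {u. (u, v) \<in> C}"
  shows "(\<integral>\<^sup>+z. ennreal (\<phi> (G (H (fst z) (snd z)) (fst z), H (fst z) (snd z))
        * \<bar>G' (H (fst z) (snd z)) (fst z)\<bar> * \<bar>H' (fst z) (snd z)\<bar>) * indicator A z \<partial>lborel) =
    (\<integral>\<^sup>+z. ennreal (\<phi> z) * indicator C z \<partial>lborel)"
proof -
  define \<psi> where "\<psi> z = \<phi> (G (snd z) (fst z), snd z) * \<bar>G' (snd z) (fst z)\<bar> * indicator B z" for z
  have [measurable]: "\<psi> \<in> borel_measurable borel"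
    unfolding \<psi>_def by measurable
  have HB: "(x, H x y) \<in> B" if "(x, y) \<in> A" for x y
    using imgH[of x] that by blast
  have "(\<integral>\<^sup>+z. ennreal (\<phi> (G (H (fst z) (snd z)) (fst z), H (fst z) (snd z))
        * \<bar>G' (H (fst z) (snd z)) (fst z)\<bar> * \<bar>H' (fst z) (snd z)\<bar>) * indicator A z \<partial>lborel) =
      (\<integral>\<^sup>+z. ennreal (\<psi> (fst z, H (fst z) (snd z)) * \<bar>H' (fst z) (snd z)\<bar>) * indicator A z \<partial>lborel)"
    by (intro nn_integral_cong) (auto simp: \<psi>_def HB split: split_indicator)
  also have "\<dots> = (\<integral>\<^sup>+z. ennreal (\<psi> z) * indicator B z \<partial>lborel)"
    by (rule nn_integral_substitution_snd) (use nn derH injH imgH in \<open>auto simp: \<psi>_def\<close>)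
  also have "\<dots> = (\<integral>\<^sup>+z. ennreal (\<phi> (G (snd z) (fst z), snd z) * \<bar>G' (snd z) (fst z)\<bar>) * indicator B z \<partial>lborel)"
    by (intro nn_integral_cong) (auto simp: \<psi>_def split: split_indicator)
  also have "\<dots> = (\<integral>\<^sup>+z. ennreal (\<phi> z) * indicator C z \<partial>lborel)"
    by (rule nn_integral_substitution_fst) (use nn derG injG imgG in auto)
  finally show ?thesis .
qed

lemma nn_integral_kernel_transfer_triangular:
  fixes KX KY KU KV :: "real \<Rightarrow> real" and T :: "real \<Rightarrow> real \<Rightarrow> real \<times> real"
    and H H' G G' :: "real \<Rightarrow> real \<Rightarrow> real" and B D :: "(real \<times> real) set"
  defines "Q \<equiv> {z :: real \<times> real. 0 < fst z \<and> 0 < snd z}"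
  assumes [measurable]: "KU \<in> borel_measurable borel" "KV \<in> borel_measurable borel"
      "B \<in> sets borel" "D \<in> sets borel"
      "(\<lambda>z. H (fst z) (snd z)) \<in> borel_measurable borel" "(\<lambda>z. H' (fst z) (snd z)) \<in> borel_measurable borel"
      "(\<lambda>z. G (snd z) (fst z)) \<in> borel_measurable borel" "(\<lambda>z. G' (snd z) (fst z)) \<in> borel_measurable borel"
    and nnU: "\<And>u. 0 \<le> KU u" and nnV: "\<And>v. 0 \<le> KV v"
    and supp_XY: "\<And>z. z \<notin> Q \<Longrightarrow> KX (fst z) * KY (snd z) = 0"
    and supp_UV: "\<And>z. z \<notin> Q \<Longrightarrow> KU (fst z) * KV (snd z) = 0"
    and derH: "\<And>x y. (x, y) \<in> Q \<Longrightarrow> (H x has_real_derivative H' x y) (at y)"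
    and injH: "\<And>x. inj_on (H x) {y. (x, y) \<in> Q}"
    and imgH: "\<And>x. H x ` {y. (x, y) \<in> Q} = {v. (x, v) \<in> B}"
    and derG: "\<And>x v. (x, v) \<in> B \<Longrightarrow> (G v has_real_derivative G' v x) (at x)"
    and injG: "\<And>v. inj_on (G v) {x. (x, v) \<in> B}"
    and imgG: "\<And>v. G v ` {x. (x, v) \<in> B} = {u. (u, v) \<in> Q}"
    and T: "\<And>x y. (x, y) \<in> Q \<Longrightarrow> T x y = (G (H x y) x, H x y)"
    and jacobian: "\<And>x y. (x, y) \<in> Q \<Longrightarrow>
      KU (G (H x y) x) * KV (H x y) * \<bar>G' (H x y) x\<bar> * \<bar>H' x y\<bar> = KX x * KY y"
  shows "(\<integral>\<^sup>+z. ennreal (KX (fst z) * KY (snd z)) * indicator D (T (fst z) (snd z)) \<partial>lborel) =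
    (\<integral>\<^sup>+z. ennreal (KU (fst z) * KV (snd z)) * indicator D z \<partial>lborel)"
proof -
  define \<phi> where "\<phi> z = KU (fst z) * KV (snd z) * indicator D z" for z
  have [measurable]: "Q \<in> sets borel"
    unfolding Q_def by measurable
  have [measurable]: "\<phi> \<in> borel_measurable borel"
    unfolding \<phi>_def by measurable
  have GQ: "(G v x, v) \<in> Q" if "(x, v) \<in> B" for x v
    using imgG[of v] that by blast
  have "(\<integral>\<^sup>+z. ennreal (KX (fst z) * KY (snd z)) * indicator D (T (fst z) (snd z)) \<partial>lborel) =
      (\<integral>\<^sup>+z. ennreal (\<phi> (G (H (fst z) (snd z)) (fst z), H (fst z) (snd z))
        * \<bar>G' (H (fst z) (snd z)) (fst z)\<bar> * \<bar>H' (fst z) (snd z)\<bar>) * indicator Q z \<partial>lborel)"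
  proof (intro nn_integral_cong)
    fix z :: "real \<times> real"
    show "ennreal (KX (fst z) * KY (snd z)) * indicator D (T (fst z) (snd z)) =
      ennreal (\<phi> (G (H (fst z) (snd z)) (fst z), H (fst z) (snd z))
        * \<bar>G' (H (fst z) (snd z)) (fst z)\<bar> * \<bar>H' (fst z) (snd z)\<bar>) * indicator Q z"
    proof (cases "z \<in> Q")
      case True
      then show ?thesis
        using T[of "fst z" "snd z"] jacobian[of "fst z" "snd z"]
        by (simp add: \<phi>_def mult_ac split: split_indicator)
    qed (simp add: supp_XY)
  qed
  also have "\<dots> = (\<integral>\<^sup>+z. ennreal (\<phi> z) * indicator Q z \<partial>lborel)"
    by (rule nn_integral_triangular_substitution)
      (use nnU nnV derH injH imgH derG injG imgG GQ in \<open>auto simp: \<phi>_def\<close>)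
  also have "\<dots> = (\<integral>\<^sup>+z. ennreal (KU (fst z) * KV (snd z)) * indicator D z \<partial>lborel)"
    by (intro nn_integral_cong) (auto simp: \<phi>_def supp_UV split: split_indicator)
  finally show ?thesis .
qed

lemma gbp_kernel_pos:
  assumes "0 < x" "0 < p" "0 < q"
  shows "0 < gbp_kernel lam a b p q x"
proof -
  have "0 < 1 + p * x" "0 < 1 + q / x"
    using assms by (simp_all add: add_pos_pos)
  then show ?thesis
    using assms unfolding gbp_kernel_def by simp
qed

lemma ln_gbp_kernel:
  assumes "0 < x" "0 < p" "0 < q"
  shows "ln (gbp_kernel lam a b p q x) =
    (lam - 1) * ln x + (- a - lam / 2) * ln (1 + p * x) + (- b + lam / 2) * ln (1 + q / x)"
proof -
  have "0 < 1 + p * x" "0 < 1 + q / x"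
    using assms by (simp_all add: add_pos_pos)
  then show ?thesis
    using assms unfolding gbp_kernel_def by (simp add: ln_mult ln_powr)
qed

lemma gbp_kernel_nonneg: "0 \<le> p \<Longrightarrow> 0 \<le> q \<Longrightarrow> 0 \<le> gbp_kernel lam a b p q x"
  unfolding gbp_kernel_def by simp

lemma gbp_kernel_nonpos_arg: "x \<le> 0 \<Longrightarrow> gbp_kernel lam a b p q x = 0"
  unfolding gbp_kernel_def by simp

lemma gbp_kernel_measurable[measurable]: "gbp_kernel lam a b p q \<in> borel_measurable borel"
  unfolding gbp_kernel_def by measurable

lemma bp_kernel_pos: "0 < x \<Longrightarrow> 0 < bp_kernel A B x"
  unfolding bp_kernel_def by simp

lemma ln_bp_kernel: "0 < x \<Longrightarrow> ln (bp_kernel A B x) = (A - 1) * ln x + (- A - B) * ln (1 + x)"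
  unfolding bp_kernel_def by (simp add: ln_mult ln_powr)

lemma bp_kernel_nonneg: "0 \<le> bp_kernel A B x"
  unfolding bp_kernel_def by simp

lemma bp_kernel_nonpos_arg: "x \<le> 0 \<Longrightarrow> bp_kernel A B x = 0"
  unfolding bp_kernel_def by simp

lemma bp_kernel_measurable[measurable]: "bp_kernel A B \<in> borel_measurable borel"
  unfolding bp_kernel_def by measurable

lemma FBe_kernel_identity:
  fixes \<delta> lam a b x y :: real
  assumes d: "0 < \<delta>" and x: "0 < x" and y: "0 < y"
  defines "u \<equiv> (1 + x + y) / (\<delta> * x * y)"
  defines "v \<equiv> (1 + x + y + \<delta> * x * y) / (\<delta> * x * (1 + x))"
  shows "gbp_kernel lam b a \<delta> 1 u * bp_kernel (a - lam / 2) lam v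
      * ((1 + v) * \<delta> * v / (\<delta> * x * v - 1)^2 * ((1 + \<delta> * x) / (\<delta> * x * (1 + x))))
    = gbp_kernel lam a b \<delta> 1 x * bp_kernel (b - lam / 2) lam y"
proof -
  define R where "R = 1 + x + y"
  define W where "W = 1 + x + y + \<delta> * x * y"
  have Rp: "0 < R" and Wp: "0 < W"
    using x y d by (simp_all add: R_def W_def add_pos_pos)
  have up: "0 < u" and vp: "0 < v"
    using x y d Rp Wp by (simp_all add: u_def v_def R_def W_def add_pos_pos)
  have dxp: "0 < 1 + \<delta> * x" "0 < 1 + x" "0 < 1 + y"
    using x y d by (simp_all add: add_pos_pos)
  have nz: "\<delta> * x * (1 + x) \<noteq> 0"
    using x d dxp by simp
  have e1: "1 + \<delta> * u = (1 + x) * (1 + y) / (x * y)"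
    using x y d unfolding u_def by (simp add: field_simps)
  have e2: "1 + 1 / u = W / R"
    using x y d Rp unfolding u_def R_def W_def by (simp add: field_simps)
  have e3: "1 + v = (1 + \<delta> * x) * R / (\<delta> * x * (1 + x))"
    using nz unfolding v_def R_def by (simp add: divide_simps) (simp add: algebra_simps)
  have e4: "\<delta> * x * v - 1 = y * (1 + \<delta> * x) / (1 + x)"
    using nz dxp unfolding v_def by (simp add: divide_simps) (simp add: algebra_simps)
  have J: "(1 + v) * \<delta> * v / (\<delta> * x * v - 1)^2 * ((1 + \<delta> * x) / (\<delta> * x * (1 + x)))
      = R * W / (\<delta>^2 * x^3 * y^2 * (1 + x))"
  proof -
    have vW: "v = W / (\<delta> * x * (1 + x))"
      unfolding v_def W_def ..
    have cancel: "(p * R / (\<delta> * x * q)) * \<delta> * (W / (\<delta> * x * q)) / (y * p / q)^2 * (p / (\<delta> * x * q))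
        = R * W / (\<delta>^2 * x^3 * y^2 * q)" if "0 < p" "0 < q" for p q
      using that x y d by (simp add: field_simps power2_eq_square power3_eq_cube)
    have "(1 + v) * \<delta> * v / (\<delta> * x * v - 1)^2 * ((1 + \<delta> * x) / (\<delta> * x * (1 + x)))
      = (((1 + \<delta> * x) * R / (\<delta> * x * (1 + x))) * \<delta> * (W / (\<delta> * x * (1 + x))))
        / (y * (1 + \<delta> * x) / (1 + x))^2 * ((1 + \<delta> * x) / (\<delta> * x * (1 + x)))"
      by (simp only: e3 e4 flip: vW)
    also have "\<dots> = R * W / (\<delta>^2 * x^3 * y^2 * (1 + x))"
      by (rule cancel) (use dxp in auto)
    finally show ?thesis .
  qed
  have Jp: "0 < R * W / (\<delta>^2 * x^3 * y^2 * (1 + x))"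
    using x y d Rp Wp dxp by simp
  have lu: "ln u = ln R - ln \<delta> - ln x - ln y"
    using x y d Rp unfolding u_def R_def by (simp add: ln_div ln_mult)
  have l1: "ln (1 + \<delta> * u) = ln (1 + x) + ln (1 + y) - ln x - ln y"
    unfolding e1 using x y dxp by (simp add: ln_div ln_mult)
  have l2: "ln (1 + 1 / u) = ln W - ln R"
    unfolding e2 using Rp Wp by (simp add: ln_div)
  have lv: "ln v = ln W - ln \<delta> - ln x - ln (1 + x)"
    using x y d Wp dxp unfolding v_def W_def by (simp add: ln_div ln_mult)
  have l3: "ln (1 + v) = ln (1 + \<delta> * x) + ln R - ln \<delta> - ln x - ln (1 + x)"
    unfolding e3 using x d dxp Rp by (simp add: ln_div ln_mult)
  have lJ: "ln (R * W / (\<delta>^2 * x^3 * y^2 * (1 + x))) = ln R + ln W - 2 * ln \<delta> - 3 * ln x - 2 * ln y - ln (1 + x)"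
    using x y d Rp Wp dxp by (simp add: ln_div ln_mult ln_realpow)
  have lx: "ln (1 + 1 / x) = ln (1 + x) - ln x"
  proof -
    have "1 + 1 / x = (1 + x) / x"
      using x by (simp add: field_simps)
    then show ?thesis
      using x dxp by (simp add: ln_div)
  qed
  have p1: "0 < gbp_kernel lam b a \<delta> 1 u" and p2: "0 < bp_kernel (a - lam / 2) lam v"
    and p3: "0 < gbp_kernel lam a b \<delta> 1 x" and p4: "0 < bp_kernel (b - lam / 2) lam y"
    using up vp x y d by (simp_all add: gbp_kernel_pos bp_kernel_pos)
  \<comment> \<open>Both sides are positive, so it suffices to compare logarithms, which are linear in the exponents.\<close>
  have LN: "ln (gbp_kernel lam b a \<delta> 1 u * bp_kernel (a - lam / 2) lam v * (R * W / (\<delta>^2 * x^3 * y^2 * (1 + x))))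
      = ln (gbp_kernel lam a b \<delta> 1 x * bp_kernel (b - lam / 2) lam y)"
    using p1 p2 p3 p4 Jp up vp x y d
    apply (simp only: ln_mult_pos mult_pos_pos ln_gbp_kernel ln_bp_kernel zero_less_one lJ)
    apply (simp only: lu l1 l2 lv l3 lx)
    apply (simp add: ln_div ln_mult dxp)
    apply (simp add: algebra_simps add_divide_distrib diff_divide_distrib)
    done
  have "gbp_kernel lam b a \<delta> 1 u * bp_kernel (a - lam / 2) lam v * (R * W / (\<delta>^2 * x^3 * y^2 * (1 + x)))
      = gbp_kernel lam a b \<delta> 1 x * bp_kernel (b - lam / 2) lam y"
    by (rule ln_inj_iff[THEN iffD1, OF _ _ LN]) (use p1 p2 p3 p4 Jp in \<open>simp_all only: mult_pos_pos\<close>)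
  then show ?thesis
    unfolding J .
qed

definition FBe_fst_via_snd :: "real \<Rightarrow> real \<Rightarrow> real \<Rightarrow> real" where
  "FBe_fst_via_snd \<delta> v x = (1 + v) / (\<delta> * x * v - 1)"

lemma snd_FBe: "snd (FBe \<delta> x y) = (1 + x + y + \<delta> * x * y) / (\<delta> * x * (1 + x))"
  by (simp add: FBe_def algebra_simps)

lemma FBe_snd_minus_one:
  assumes "0 < \<delta>" "0 < x"
  shows "\<delta> * x * snd (FBe \<delta> x y) - 1 = y * (1 + \<delta> * x) / (1 + x)"
  using assms by (simp add: snd_FBe divide_simps) (simp add: algebra_simps)

lemma fst_FBe_via_snd:
  assumes d: "0 < \<delta>" and x: "0 < x" and y: "0 < y"
  shows "fst (FBe \<delta> x y) = FBe_fst_via_snd \<delta> (snd (FBe \<delta> x y)) x"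
proof -
  have p: "0 < 1 + x" "0 < 1 + \<delta> * x"
    using x d by (simp_all add: add_pos_pos)
  have "y + \<delta> * (x * y) \<noteq> 0"
    using mult_pos_pos[OF y p(2)] by (simp add: algebra_simps)
  then have "FBe_fst_via_snd \<delta> (snd (FBe \<delta> x y)) x = (1 + x + y) / (\<delta> * x * y)"
    unfolding FBe_fst_via_snd_def FBe_snd_minus_one[OF d x] unfolding snd_FBe
    using x y d p by (simp add: divide_simps) (simp add: algebra_simps)
  then show ?thesis
    by (simp add: FBe_def)
qed

lemma has_real_derivative_snd_FBe:
  assumes "0 < \<delta>" "0 < x"
  shows "((\<lambda>y. snd (FBe \<delta> x y)) has_real_derivative (1 + \<delta> * x) / (\<delta> * x * (1 + x))) (at y)"
proof -
  have "((\<lambda>y. 1 + x + y + \<delta> * x * y) has_real_derivative 1 + \<delta> * x) (at y)"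
    by (auto intro!: derivative_eq_intros)
  then show ?thesis
    unfolding snd_FBe by (rule DERIV_cdivide)
qed

lemma inj_snd_FBe:
  assumes "0 < \<delta>" "0 < x"
  shows "inj (\<lambda>y. snd (FBe \<delta> x y))"
proof (rule injI)
  fix y1 y2 assume "snd (FBe \<delta> x y1) = snd (FBe \<delta> x y2)"
  moreover have "\<delta> * x * (1 + x) \<noteq> 0"
    using assms by (simp add: add_pos_pos)
  ultimately have "1 + x + y1 + \<delta> * x * y1 = 1 + x + y2 + \<delta> * x * y2"
    by (simp add: snd_FBe)
  then have "y1 * (1 + \<delta> * x) = y2 * (1 + \<delta> * x)"
    by (simp add: algebra_simps)
  moreover have "0 < 1 + \<delta> * x"
    using assms by (simp add: add_pos_pos)
  ultimately show "y1 = y2"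
    by simp
qed

lemma image_snd_FBe:
  assumes d: "0 < \<delta>" and x: "0 < x"
  shows "(\<lambda>y. snd (FBe \<delta> x y)) ` {0<..} = {v. 1 < \<delta> * x * v}"
proof (intro equalityI subsetI)
  fix v assume "v \<in> (\<lambda>y. snd (FBe \<delta> x y)) ` {0<..}"
  then obtain y where y: "0 < y" and v: "v = snd (FBe \<delta> x y)"
    by auto
  have "\<delta> * x * v - 1 = y * (1 + \<delta> * x) / (1 + x)"
    unfolding v by (rule FBe_snd_minus_one[OF d x])
  moreover have "0 < y * (1 + \<delta> * x) / (1 + x)"
    using d x y by (simp add: add_pos_pos)
  ultimately show "v \<in> {v. 1 < \<delta> * x * v}"
    by simp
next
  fix v assume v: "v \<in> {v. 1 < \<delta> * x * v}"
  have p: "0 < 1 + x" "0 < 1 + \<delta> * x"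
    using d x by (simp_all add: add_pos_pos)
  define y where "y = (1 + x) * (\<delta> * x * v - 1) / (1 + \<delta> * x)"
  have "0 < y"
    using v p by (simp add: y_def)
  moreover have "snd (FBe \<delta> x y) = v"
    using d x p unfolding snd_FBe y_def by (simp add: divide_simps) (simp add: algebra_simps)
  ultimately show "v \<in> (\<lambda>y. snd (FBe \<delta> x y)) ` {0<..}"
    by force
qed

lemma has_real_derivative_FBe_fst_via_snd:
  assumes "\<delta> * x * v \<noteq> 1"
  shows "(FBe_fst_via_snd \<delta> v has_real_derivative - ((1 + v) * \<delta> * v) / (\<delta> * x * v - 1)^2) (at x)"
  unfolding FBe_fst_via_snd_def[abs_def]
  using assms by (auto intro!: derivative_eq_intros simp: power2_eq_square field_simps)

lemma inj_on_FBe_fst_via_snd: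
  assumes "0 < \<delta>" "0 < v"
  shows "inj_on (FBe_fst_via_snd \<delta> v) {x. 1 < \<delta> * x * v}"
proof (rule inj_onI)
  fix x1 x2 assume "x1 \<in> {x. 1 < \<delta> * x * v}" "x2 \<in> {x. 1 < \<delta> * x * v}"
    and "FBe_fst_via_snd \<delta> v x1 = FBe_fst_via_snd \<delta> v x2"
  then have "\<delta> * x1 * v - 1 = \<delta> * x2 * v - 1"
    using assms by (simp add: FBe_fst_via_snd_def field_simps)
  then show "x1 = x2"
    using assms by simp
qed

lemma image_FBe_fst_via_snd:
  assumes d: "0 < \<delta>" and v: "0 < v"
  shows "FBe_fst_via_snd \<delta> v ` {x. 1 < \<delta> * x * v} = {0<..}"
proof (intro equalityI subsetI)
  fix u assume "u \<in> FBe_fst_via_snd \<delta> v ` {x. 1 < \<delta> * x * v}"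
  then show "u \<in> {0<..}"
    using v by (auto simp: FBe_fst_via_snd_def)
next
  fix u :: real assume "u \<in> {0<..}"
  then have u: "0 < u"
    by simp
  define x where "x = (1 + v + u) / (\<delta> * u * v)"
  have e: "\<delta> * x * v - 1 = (1 + v) / u"
    using u v d by (simp add: x_def field_simps)
  have "0 < (1 + v) / u"
    using u v by simp
  then have "x \<in> {x. 1 < \<delta> * x * v}"
    using e by simp
  moreover have "FBe_fst_via_snd \<delta> v x = u"
    unfolding FBe_fst_via_snd_def e using u v by simp
  ultimately show "u \<in> FBe_fst_via_snd \<delta> v ` {x. 1 < \<delta> * x * v}"
    by force
qed

lemma FBe_jacobian_identity:
  fixes \<delta> lam a b x y :: real
  assumes d: "0 < \<delta>" and x: "0 < x" and y: "0 < y"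
  defines "v \<equiv> snd (FBe \<delta> x y)"
  shows "gbp_kernel lam b a \<delta> 1 (FBe_fst_via_snd \<delta> v x) * bp_kernel (a - lam / 2) lam v
      * \<bar>- ((1 + v) * \<delta> * v) / (\<delta> * x * v - 1)^2\<bar> * \<bar>(1 + \<delta> * x) / (\<delta> * x * (1 + x))\<bar>
    = gbp_kernel lam a b \<delta> 1 x * bp_kernel (b - lam / 2) lam y"
proof -
  have v: "v = (1 + x + y + \<delta> * x * y) / (\<delta> * x * (1 + x))"
    by (simp add: v_def snd_FBe)
  have "0 < v"
    using d x y by (simp add: v add_pos_pos)
  then have absG: "\<bar>- ((1 + v) * \<delta> * v) / (\<delta> * x * v - 1)^2\<bar> = (1 + v) * \<delta> * v / (\<delta> * x * v - 1)^2"
    using d by simp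
  have absH: "\<bar>(1 + \<delta> * x) / (\<delta> * x * (1 + x))\<bar> = (1 + \<delta> * x) / (\<delta> * x * (1 + x))"
    using d x by (simp add: add_pos_pos)
  have "FBe_fst_via_snd \<delta> v x = fst (FBe \<delta> x y)"
    unfolding v_def by (rule fst_FBe_via_snd[OF d x y, symmetric])
  then have u: "FBe_fst_via_snd \<delta> v x = (1 + x + y) / (\<delta> * x * y)"
    by (simp add: FBe_def)
  show ?thesis
    unfolding absG absH mult.assoc[of _ _ "(1 + \<delta> * x) / (\<delta> * x * (1 + x))"]
    unfolding u unfolding v by (rule FBe_kernel_identity[OF d x y])
qed

lemma nn_integral_FBe_transfer:
  fixes \<delta> lam a b :: real and C :: "(real \<times> real) set"
  assumes d: "0 < \<delta>" and [measurable]: "C \<in> sets borel"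
  shows "(\<integral>\<^sup>+z. ennreal (gbp_kernel lam a b \<delta> 1 (fst z) * bp_kernel (b - lam / 2) lam (snd z))
      * indicator C (FBe \<delta> (fst z) (snd z)) \<partial>lborel) =
    (\<integral>\<^sup>+z. ennreal (gbp_kernel lam b a \<delta> 1 (fst z) * bp_kernel (a - lam / 2) lam (snd z))
      * indicator C z \<partial>lborel)"
proof -
  let ?Q = "{z :: real \<times> real. 0 < fst z \<and> 0 < snd z}"
  let ?B = "{z :: real \<times> real. 0 < fst z \<and> 1 < \<delta> * fst z * snd z}"
  let ?H = "\<lambda>x y. snd (FBe \<delta> x y)"
  let ?H' = "\<lambda>x y. (1 + \<delta> * x) / (\<delta> * x * (1 + x))"
  let ?G = "FBe_fst_via_snd \<delta>"
  let ?G' = "\<lambda>v x. - ((1 + v) * \<delta> * v) / (\<delta> * x * v - 1)^2"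
  have sliceQ: "{y. (x, y) \<in> ?Q} = (if 0 < x then {0<..} else {})"
      "{u. (u, v) \<in> ?Q} = (if 0 < v then {0<..} else {})" for x v :: real
    by auto
  have sliceB: "{v. (x, v) \<in> ?B} = (if 0 < x then {v. 1 < \<delta> * x * v} else {})"
      "{x. (x, v) \<in> ?B} = (if 0 < v then {x. 1 < \<delta> * x * v} else {})" for x v :: real
  proof -
    have sign: "0 < x \<longleftrightarrow> 0 < v" if "1 < \<delta> * x * v" for x v :: real
    proof -
      have "0 < \<delta> * (x * v)"
        using that by (simp add: mult.assoc)
      then have "0 < x * v"
        using d by (simp add: zero_less_mult_iff)
      then show ?thesis
        by (auto simp: zero_less_mult_iff)
    qed
    show "{v. (x, v) \<in> ?B} = (if 0 < x then {v. 1 < \<delta> * x * v} else {})"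
        "{x. (x, v) \<in> ?B} = (if 0 < v then {x. 1 < \<delta> * x * v} else {})"
      using sign by auto
  qed
  have mH: "(\<lambda>z. ?H (fst z) (snd z)) \<in> borel_measurable borel"
    unfolding FBe_def by measurable
  have mG: "(\<lambda>z. ?G (snd z) (fst z)) \<in> borel_measurable borel"
    unfolding FBe_fst_via_snd_def by measurable
  have derH: "(?H x has_real_derivative ?H' x y) (at y)" if "(x, y) \<in> ?Q" for x y
    using that d by (simp add: has_real_derivative_snd_FBe)
  have injH: "inj_on (?H x) {y. (x, y) \<in> ?Q}" for x
    using inj_snd_FBe[OF d, of x] by (cases "0 < x") (auto intro: inj_on_subset)
  have imgH: "?H x ` {y. (x, y) \<in> ?Q} = {v. (x, v) \<in> ?B}" for x
  proof (cases "0 < x")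
    case True
    then have "{y. (x, y) \<in> ?Q} = {0<..}" "{v. (x, v) \<in> ?B} = {v. 1 < \<delta> * x * v}"
      by auto
    then show ?thesis
      using image_snd_FBe[OF d True] by simp
  qed auto
  have derG: "(?G v has_real_derivative ?G' v x) (at x)" if "(x, v) \<in> ?B" for x v
    using that by (intro has_real_derivative_FBe_fst_via_snd) simp
  have injG: "inj_on (?G v) {x. (x, v) \<in> ?B}" for v
    unfolding sliceB(2) using d by (simp add: inj_on_FBe_fst_via_snd)
  have imgG: "?G v ` {x. (x, v) \<in> ?B} = {u. (u, v) \<in> ?Q}" for v
    unfolding sliceB(2) sliceQ(2) using d by (simp add: image_FBe_fst_via_snd)
  have jacobian: "gbp_kernel lam b a \<delta> 1 (?G (?H x y) x) * bp_kernel (a - lam / 2) lam (?H x y)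
      * \<bar>?G' (?H x y) x\<bar> * \<bar>?H' x y\<bar> = gbp_kernel lam a b \<delta> 1 x * bp_kernel (b - lam / 2) lam y"
    if "(x, y) \<in> ?Q" for x y
    by (rule FBe_jacobian_identity) (use that d in auto)
  have supp: "gbp_kernel lam a b \<delta> 1 (fst z) * bp_kernel (b - lam / 2) lam (snd z) = 0"
      "gbp_kernel lam b a \<delta> 1 (fst z) * bp_kernel (a - lam / 2) lam (snd z) = 0" if "z \<notin> ?Q" for z
  proof -
    have "fst z \<le> 0 \<or> snd z \<le> 0"
      using that by auto
    then show "gbp_kernel lam a b \<delta> 1 (fst z) * bp_kernel (b - lam / 2) lam (snd z) = 0"
        "gbp_kernel lam b a \<delta> 1 (fst z) * bp_kernel (a - lam / 2) lam (snd z) = 0"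
      by (auto simp only: gbp_kernel_nonpos_arg bp_kernel_nonpos_arg mult_zero_left mult_zero_right)
  qed
  show ?thesis
  proof (rule nn_integral_kernel_transfer_triangular[where B = ?B and H = ?H and H' = ?H' and G = ?G and G' = ?G'])
    show "FBe \<delta> x y = (?G (?H x y) x, ?H x y)" if "(x, y) \<in> ?Q" for x y
      using that d by (simp add: prod_eq_iff fst_FBe_via_snd)
  qed (fact derH injH imgH derG injG imgG jacobian supp mH mG bp_kernel_nonneg
      gbp_kernel_nonneg[OF less_imp_le[OF d] zero_le_one] | simp)+
qed

lemma mobius_has_real_derivative:
  fixes A B C D t :: real
  assumes "C + D * t \<noteq> 0"
  shows "((\<lambda>t. (A + B * t) / (C + D * t)) has_real_derivative (B * C - A * D) / (C + D * t)^2) (at t)"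
  using assms by (auto intro!: derivative_eq_intros simp: power2_eq_square field_simps)

lemma mobius_inj:
  fixes A B C D t1 t2 :: real
  assumes "B * C - A * D \<noteq> 0" "C + D * t1 \<noteq> 0" "C + D * t2 \<noteq> 0"
    and "(A + B * t1) / (C + D * t1) = (A + B * t2) / (C + D * t2)"
  shows "t1 = t2"
proof -
  have "(A + B * t1) * (C + D * t2) = (A + B * t2) * (C + D * t1)"
    using assms(2-4) by (simp add: field_simps)
  then have "(B * C - A * D) * (t1 - t2) = 0"
    by (simp add: algebra_simps)
  then show ?thesis
    using assms(1) by simp
qed

lemma mobius_inverse:
  fixes A B C D v :: real
  assumes "v * D - B \<noteq> 0" "B * C - A * D \<noteq> 0"
  defines "t \<equiv> (A - v * C) / (v * D - B)"
  shows "(A + B * t) / (C + D * t) = v"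
proof -
  have e1: "A + B * t = v * (A * D - B * C) / (v * D - B)"
    using assms(1) unfolding t_def by (simp add: field_simps; simp add: algebra_simps)
  have e2: "C + D * t = (A * D - B * C) / (v * D - B)"
    using assms(1) unfolding t_def by (simp add: field_simps; simp add: algebra_simps)
  have "A * D - B * C \<noteq> 0"
    using assms(2) by (simp add: algebra_simps)
  then show ?thesis
    unfolding e1 e2 using assms(1) by simp
qed

lemma snd_HI: "snd (HI \<alpha> \<beta> x y) = (1 + x + y + \<alpha> * x * y) / (x * (\<alpha> + \<alpha> * x + \<beta> * y + \<alpha> * \<beta> * x * y))"
  by (simp add: HI_def)

lemma snd_HI_mobius:
  "snd (HI \<alpha> \<beta> x y) = ((1 + x) + (1 + \<alpha> * x) * y) / (x * \<alpha> * (1 + x) + x * \<beta> * (1 + \<alpha> * x) * y)"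
proof -
  have "1 + x + y + \<alpha> * x * y = (1 + x) + (1 + \<alpha> * x) * y"
    "x * (\<alpha> + \<alpha> * x + \<beta> * y + \<alpha> * \<beta> * x * y) = x * \<alpha> * (1 + x) + x * \<beta> * (1 + \<alpha> * x) * y"
    by (simp_all add: algebra_simps)
  then show ?thesis
    by (simp add: snd_HI)
qed

lemma HI_denominator_pos:
  fixes \<alpha> \<beta> x y :: real
  assumes "0 < \<alpha>" "0 < \<beta>" "0 < x" "0 < y"
  shows "0 < \<alpha> + \<alpha> * x + \<beta> * y + \<alpha> * \<beta> * x * y" "0 < \<beta> + \<alpha> * x + \<beta> * y + \<alpha> * \<beta> * x * y"
  using assms by (simp_all add: add_pos_pos)

lemma HI_snd_identities:
  fixes \<alpha> \<beta> x y :: real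
  assumes "0 < \<alpha>" "0 < \<beta>" and x: "0 < x" and "0 < y"
  defines "v \<equiv> snd (HI \<alpha> \<beta> x y)" and "D \<equiv> \<alpha> + \<alpha> * x + \<beta> * y + \<alpha> * \<beta> * x * y"
  shows "1 - \<alpha> * v * x = y * (\<beta> - \<alpha>) * (1 + \<alpha> * x) / D"
    and "\<beta> * v * x - 1 = (\<beta> - \<alpha>) * (1 + x) / D"
    and "1 + v = (1 + \<alpha> * x) * (1 + x + y + \<beta> * x * y) / (x * D)"
    and "1 + \<beta> * v = (1 + x) * (\<beta> + \<alpha> * x + \<beta> * y + \<alpha> * \<beta> * x * y) / (x * D)"
proof -
  define N where "N = 1 + x + y + \<alpha> * x * y"
  have D: "D \<noteq> 0"
    using HI_denominator_pos(1)[OF assms(1-4)] by (simp add: D_def)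
  have v: "v = N / (x * D)"
    by (simp add: v_def N_def D_def snd_HI)
  have "1 - \<alpha> * v * x = (D - \<alpha> * N) / D" "\<beta> * v * x - 1 = (\<beta> * N - D) / D"
      "1 + v = (x * D + N) / (x * D)" "1 + \<beta> * v = (x * D + \<beta> * N) / (x * D)"
    using x D unfolding v by (simp_all add: field_simps)
  moreover have "D - \<alpha> * N = y * (\<beta> - \<alpha>) * (1 + \<alpha> * x)" "\<beta> * N - D = (\<beta> - \<alpha>) * (1 + x)"
      "x * D + N = (1 + \<alpha> * x) * (1 + x + y + \<beta> * x * y)"
      "x * D + \<beta> * N = (1 + x) * (\<beta> + \<alpha> * x + \<beta> * y + \<alpha> * \<beta> * x * y)"
    by (simp_all add: D_def N_def algebra_simps)
  ultimately show "1 - \<alpha> * v * x = y * (\<beta> - \<alpha>) * (1 + \<alpha> * x) / D"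
    and "\<beta> * v * x - 1 = (\<beta> - \<alpha>) * (1 + x) / D"
    and "1 + v = (1 + \<alpha> * x) * (1 + x + y + \<beta> * x * y) / (x * D)"
    and "1 + \<beta> * v = (1 + x) * (\<beta> + \<alpha> * x + \<beta> * y + \<alpha> * \<beta> * x * y) / (x * D)"
    by simp_all
qed

lemma has_real_derivative_snd_HI:
  fixes \<alpha> \<beta> x y :: real
  assumes "0 < \<alpha>" "0 < \<beta>" "0 < x" "0 < y"
  shows "((\<lambda>y. snd (HI \<alpha> \<beta> x y)) has_real_derivative
    - (x * (1 + x) * (1 + \<alpha> * x) * (\<beta> - \<alpha>)) / (x * (\<alpha> + \<alpha> * x + \<beta> * y + \<alpha> * \<beta> * x * y))^2) (at y)"
proof -
  have den: "x * \<alpha> * (1 + x) + x * \<beta> * (1 + \<alpha> * x) * y = x * (\<alpha> + \<alpha> * x + \<beta> * y + \<alpha> * \<beta> * x * y)"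
    by (simp add: algebra_simps)
  have det: "(1 + \<alpha> * x) * (x * \<alpha> * (1 + x)) - (1 + x) * (x * \<beta> * (1 + \<alpha> * x))
      = - (x * (1 + x) * (1 + \<alpha> * x) * (\<beta> - \<alpha>))"
    by (simp add: algebra_simps)
  have "x * \<alpha> * (1 + x) + x * \<beta> * (1 + \<alpha> * x) * y \<noteq> 0"
    unfolding den using assms HI_denominator_pos(1)[OF assms] by simp
  from mobius_has_real_derivative[OF this, of "1 + x" "1 + \<alpha> * x"]
  show ?thesis
    unfolding snd_HI_mobius det den .
qed

lemma inj_on_snd_HI:
  fixes \<alpha> \<beta> x :: real
  assumes al: "0 < \<alpha>" and be: "0 < \<beta>" and ne: "\<alpha> \<noteq> \<beta>" and x: "0 < x"
  shows "inj_on (\<lambda>y. snd (HI \<alpha> \<beta> x y)) {0<..}"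
proof (rule inj_onI)
  fix y1 y2 :: real assume y: "y1 \<in> {0<..}" "y2 \<in> {0<..}" and eq: "snd (HI \<alpha> \<beta> x y1) = snd (HI \<alpha> \<beta> x y2)"
  have den: "x * \<alpha> * (1 + x) + x * \<beta> * (1 + \<alpha> * x) * y \<noteq> 0" if "0 < y" for y
  proof -
    have "x * \<alpha> * (1 + x) + x * \<beta> * (1 + \<alpha> * x) * y = x * (\<alpha> + \<alpha> * x + \<beta> * y + \<alpha> * \<beta> * x * y)"
      by (simp add: algebra_simps)
    then show ?thesis
      using HI_denominator_pos(1)[OF al be x that] x by simp
  qed
  have "(1 + \<alpha> * x) * (x * \<alpha> * (1 + x)) - (1 + x) * (x * \<beta> * (1 + \<alpha> * x)) = - (x * (1 + x) * (1 + \<alpha> * x) * (\<beta> - \<alpha>))"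
    by (simp add: algebra_simps)
  moreover have "0 < 1 + \<alpha> * x"
    using al x by (simp add: add_pos_pos)
  then have "x * (1 + x) * (1 + \<alpha> * x) * (\<beta> - \<alpha>) \<noteq> 0"
    using x ne by simp
  ultimately show "y1 = y2"
    using mobius_inj[of "1 + \<alpha> * x" "x * \<alpha> * (1 + x)" "1 + x" "x * \<beta> * (1 + \<alpha> * x)" y1 y2] den y eq
    by (simp add: snd_HI_mobius)
qed

lemma image_snd_HI:
  fixes \<alpha> \<beta> x :: real
  assumes al: "0 < \<alpha>" and be: "0 < \<beta>" and ne: "\<alpha> \<noteq> \<beta>" and x: "0 < x"
  shows "(\<lambda>y. snd (HI \<alpha> \<beta> x y)) ` {0<..} = {v. 0 < v \<and> (\<alpha> * x * v - 1) * (\<beta> * x * v - 1) < 0}"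
proof (intro equalityI subsetI)
  fix v assume "v \<in> (\<lambda>y. snd (HI \<alpha> \<beta> x y)) ` {0<..}"
  then obtain y where y: "0 < y" and v: "v = snd (HI \<alpha> \<beta> x y)"
    by auto
  define D where "D = \<alpha> + \<alpha> * x + \<beta> * y + \<alpha> * \<beta> * x * y"
  have D: "0 < D"
    using HI_denominator_pos(1)[OF al be x y] by (simp add: D_def)
  have "(\<alpha> * x * v - 1) * (\<beta> * x * v - 1) = - ((1 - \<alpha> * v * x) * (\<beta> * v * x - 1))"
    by (simp add: algebra_simps)
  also have "\<dots> = - (y * (\<beta> - \<alpha>)^2 * (1 + \<alpha> * x) * (1 + x) / D^2)"
    unfolding v HI_snd_identities(1,2)[OF al be x y] D_def[symmetric]
    by (simp add: power2_eq_square field_simps)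
  finally have "(\<alpha> * x * v - 1) * (\<beta> * x * v - 1) < 0"
    using y x al ne D by (simp add: add_pos_pos)
  moreover have "0 < v"
    using x y al be D unfolding v snd_HI D_def[symmetric] by (simp add: add_pos_pos)
  ultimately show "v \<in> {v. 0 < v \<and> (\<alpha> * x * v - 1) * (\<beta> * x * v - 1) < 0}"
    by simp
next
  fix v assume "v \<in> {v. 0 < v \<and> (\<alpha> * x * v - 1) * (\<beta> * x * v - 1) < 0}"
  then have v: "0 < v" and sign: "(\<alpha> * x * v - 1) * (\<beta> * x * v - 1) < 0"
    by auto
  define A0 where "A0 = 1 + x"
  define B0 where "B0 = 1 + \<alpha> * x"
  define C0 where "C0 = x * \<alpha> * (1 + x)"
  define D0 where "D0 = x * \<beta> * (1 + \<alpha> * x)"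
  define y where "y = (A0 - v * C0) / (v * D0 - B0)"
  have n1: "A0 - v * C0 = (1 + x) * (1 - \<alpha> * x * v)" and n2: "v * D0 - B0 = (1 + \<alpha> * x) * (\<beta> * x * v - 1)"
    by (simp_all add: A0_def B0_def C0_def D0_def algebra_simps)
  have pos: "0 < 1 + x" "0 < 1 + \<alpha> * x"
    using al x by (simp_all add: add_pos_pos)
  have "0 < (1 - \<alpha> * x * v) * (\<beta> * x * v - 1)"
    using sign by (simp add: algebra_simps)
  then have prod: "0 < ((1 + x) * (1 + \<alpha> * x)) * ((1 - \<alpha> * x * v) * (\<beta> * x * v - 1))"
    using pos by simp
  have "((1 + x) * (1 - \<alpha> * x * v)) * ((1 + \<alpha> * x) * (\<beta> * x * v - 1))
      = ((1 + x) * (1 + \<alpha> * x)) * ((1 - \<alpha> * x * v) * (\<beta> * x * v - 1))"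
    by (simp add: ac_simps)
  then have "0 < ((1 + x) * (1 - \<alpha> * x * v)) * ((1 + \<alpha> * x) * (\<beta> * x * v - 1))"
    using prod by (simp only:)
  then have "0 < y"
    unfolding y_def n1 n2 by (simp add: zero_less_mult_iff zero_less_divide_iff)
  moreover have "snd (HI \<alpha> \<beta> x y) = v"
  proof -
    have "v * D0 - B0 \<noteq> 0"
      unfolding n2 using sign pos by auto
    moreover have "B0 * C0 - A0 * D0 = - (x * (1 + x) * (1 + \<alpha> * x) * (\<beta> - \<alpha>))"
      by (simp add: A0_def B0_def C0_def D0_def algebra_simps)
    then have "B0 * C0 - A0 * D0 \<noteq> 0"
      using x ne pos by simp
    ultimately show ?thesis
      using mobius_inverse[of v D0 B0 C0 A0] by (simp add: snd_HI_mobius y_def A0_def B0_def C0_def D0_def)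
  qed
  ultimately show "v \<in> (\<lambda>y. snd (HI \<alpha> \<beta> x y)) ` {0<..}"
    by force
qed

definition HI_fst_via_snd :: "real \<Rightarrow> real \<Rightarrow> real \<Rightarrow> real \<Rightarrow> real" where
  "HI_fst_via_snd \<alpha> \<beta> v x = ((1 + v) * (\<beta> * v * x - 1)) / ((1 + \<beta> * v) * (1 - \<alpha> * v * x))"

lemma HI_fst_via_snd_mobius:
  "HI_fst_via_snd \<alpha> \<beta> v x =
    (- (1 + v) + \<beta> * v * (1 + v) * x) / ((1 + \<beta> * v) + - (\<alpha> * v * (1 + \<beta> * v)) * x)"
proof -
  have "(1 + v) * (\<beta> * v * x - 1) = - (1 + v) + \<beta> * v * (1 + v) * x"
    "(1 + \<beta> * v) * (1 - \<alpha> * v * x) = (1 + \<beta> * v) + - (\<alpha> * v * (1 + \<beta> * v)) * x"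
    by (simp_all add: algebra_simps)
  then show ?thesis
    by (simp add: HI_fst_via_snd_def)
qed

lemma HI_fst_via_snd_det:
  fixes \<alpha> \<beta> v :: real
  shows "(\<beta> * v * (1 + v)) * (1 + \<beta> * v) - (- (1 + v)) * (- (\<alpha> * v * (1 + \<beta> * v)))
    = v * (1 + v) * (1 + \<beta> * v) * (\<beta> - \<alpha>)"
  by (simp add: algebra_simps)

lemma has_real_derivative_HI_fst_via_snd:
  fixes \<alpha> \<beta> v x :: real
  assumes "0 < \<beta>" "0 < v" "\<alpha> * v * x \<noteq> 1"
  shows "(HI_fst_via_snd \<alpha> \<beta> v has_real_derivative
    v * (1 + v) * (1 + \<beta> * v) * (\<beta> - \<alpha>) / ((1 + \<beta> * v) * (1 - \<alpha> * v * x))^2) (at x)"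
proof -
  have den: "(1 + \<beta> * v) + - (\<alpha> * v * (1 + \<beta> * v)) * x = (1 + \<beta> * v) * (1 - \<alpha> * v * x)"
    by (simp add: algebra_simps)
  have "0 < 1 + \<beta> * v"
    using assms by (simp add: add_pos_pos)
  then have "(1 + \<beta> * v) + - (\<alpha> * v * (1 + \<beta> * v)) * x \<noteq> 0"
    unfolding den using assms(3) by simp
  from mobius_has_real_derivative[OF this, of "- (1 + v)" "\<beta> * v * (1 + v)"]
  show ?thesis
    unfolding HI_fst_via_snd_det den HI_fst_via_snd_mobius[abs_def] .
qed

lemma inj_on_HI_fst_via_snd:
  fixes \<alpha> \<beta> v :: real
  assumes be: "0 < \<beta>" and ne: "\<alpha> \<noteq> \<beta>" and v: "0 < v"
  shows "inj_on (HI_fst_via_snd \<alpha> \<beta> v) {x. 0 < x \<and> (\<alpha> * x * v - 1) * (\<beta> * x * v - 1) < 0}"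
proof (rule inj_onI)
  fix x1 x2 assume x: "x1 \<in> {x. 0 < x \<and> (\<alpha> * x * v - 1) * (\<beta> * x * v - 1) < 0}"
    "x2 \<in> {x. 0 < x \<and> (\<alpha> * x * v - 1) * (\<beta> * x * v - 1) < 0}"
    and eq: "HI_fst_via_snd \<alpha> \<beta> v x1 = HI_fst_via_snd \<alpha> \<beta> v x2"
  have pos: "0 < 1 + \<beta> * v"
    using be v by (simp add: add_pos_pos)
  have den: "(1 + \<beta> * v) + - (\<alpha> * v * (1 + \<beta> * v)) * x \<noteq> 0"
    if "(\<alpha> * x * v - 1) * (\<beta> * x * v - 1) < 0" for x
  proof -
    have "(1 + \<beta> * v) + - (\<alpha> * v * (1 + \<beta> * v)) * x = (1 + \<beta> * v) * (1 - \<alpha> * v * x)"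
      by (simp add: algebra_simps)
    moreover have "\<alpha> * v * x \<noteq> 1"
      using that by (auto simp: mult_ac)
    ultimately show ?thesis
      using pos by simp
  qed
  have det: "(\<beta> * v * (1 + v)) * (1 + \<beta> * v) - (- (1 + v)) * (- (\<alpha> * v * (1 + \<beta> * v))) \<noteq> 0"
    unfolding HI_fst_via_snd_det using v pos ne by (simp add: add_pos_pos)
  have "(\<alpha> * x1 * v - 1) * (\<beta> * x1 * v - 1) < 0" "(\<alpha> * x2 * v - 1) * (\<beta> * x2 * v - 1) < 0"
    using x by auto
  then have "(1 + \<beta> * v) + - (\<alpha> * v * (1 + \<beta> * v)) * x1 \<noteq> 0"
    "(1 + \<beta> * v) + - (\<alpha> * v * (1 + \<beta> * v)) * x2 \<noteq> 0"
    by (simp_all only: den not_False_eq_True)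
  moreover have "(- (1 + v) + \<beta> * v * (1 + v) * x1) / ((1 + \<beta> * v) + - (\<alpha> * v * (1 + \<beta> * v)) * x1)
      = (- (1 + v) + \<beta> * v * (1 + v) * x2) / ((1 + \<beta> * v) + - (\<alpha> * v * (1 + \<beta> * v)) * x2)"
    using eq by (simp only: HI_fst_via_snd_mobius)
  ultimately show "x1 = x2"
    by (rule mobius_inj[OF det])
qed

lemma image_HI_fst_via_snd:
  fixes \<alpha> \<beta> v :: real
  assumes al: "0 < \<alpha>" and be: "0 < \<beta>" and ne: "\<alpha> \<noteq> \<beta>" and v: "0 < v"
  shows "HI_fst_via_snd \<alpha> \<beta> v ` {x. 0 < x \<and> (\<alpha> * x * v - 1) * (\<beta> * x * v - 1) < 0} = {0<..}"
proof (intro equalityI subsetI)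
  fix u assume "u \<in> HI_fst_via_snd \<alpha> \<beta> v ` {x. 0 < x \<and> (\<alpha> * x * v - 1) * (\<beta> * x * v - 1) < 0}"
  then obtain x where sign: "(\<alpha> * x * v - 1) * (\<beta> * x * v - 1) < 0" and u: "u = HI_fst_via_snd \<alpha> \<beta> v x"
    by auto
  have "((1 + v) * (\<beta> * v * x - 1)) * ((1 + \<beta> * v) * (1 - \<alpha> * v * x))
      = ((1 + v) * (1 + \<beta> * v)) * - ((\<alpha> * x * v - 1) * (\<beta> * x * v - 1))"
    by (simp add: algebra_simps)
  moreover have pos: "0 < (1 + v) * (1 + \<beta> * v)"
    using v be by (simp add: add_pos_pos)
  have "0 < ((1 + v) * (1 + \<beta> * v)) * - ((\<alpha> * x * v - 1) * (\<beta> * x * v - 1))"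
    using sign mult_pos_pos[OF pos, of "- ((\<alpha> * x * v - 1) * (\<beta> * x * v - 1))"] by simp
  ultimately have "0 < ((1 + v) * (\<beta> * v * x - 1)) * ((1 + \<beta> * v) * (1 - \<alpha> * v * x))"
    by (simp only:)
  then show "u \<in> {0<..}"
    unfolding u HI_fst_via_snd_def by (simp add: zero_less_mult_iff zero_less_divide_iff)
next
  fix u :: real assume "u \<in> {0<..}"
  then have u: "0 < u"
    by simp
  define D where "D = \<beta> * (1 + v) + \<alpha> * u * (1 + \<beta> * v)"
  have D: "0 < D"
    using u v al be by (simp add: D_def add_pos_pos)
  define x where "x = (u * (1 + \<beta> * v) + 1 + v) / (v * D)"
  have x: "0 < x"
    using u v be D by (simp add: x_def add_pos_pos)
  have ex1: "1 - \<alpha> * v * x = (\<beta> - \<alpha>) * (1 + v) / D"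
    using v D unfolding x_def by (simp add: field_simps) (simp add: D_def algebra_simps)
  have ex2: "\<beta> * v * x - 1 = u * (\<beta> - \<alpha>) * (1 + \<beta> * v) / D"
    using v D unfolding x_def by (simp add: field_simps) (simp add: D_def algebra_simps)
  have "(\<alpha> * x * v - 1) * (\<beta> * x * v - 1) = - ((1 - \<alpha> * v * x) * (\<beta> * v * x - 1))"
    by (simp add: algebra_simps)
  also have "\<dots> = - ((\<beta> - \<alpha>)^2 * (u * (1 + v) * (1 + \<beta> * v)) / D^2)"
    unfolding ex1 ex2 by (simp add: power2_eq_square field_simps)
  finally have "(\<alpha> * x * v - 1) * (\<beta> * x * v - 1) < 0"
    using ne u v be D by (simp add: add_pos_pos)
  moreover have "HI_fst_via_snd \<alpha> \<beta> v x = u"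
  proof -
    have cancel: "(a * (u * k * b / D)) / (b * (k * a / D)) = u" if "a \<noteq> 0" "b \<noteq> 0" "k \<noteq> 0" for a b k
      using that D by (simp add: field_simps)
    have "0 < 1 + v" "0 < 1 + \<beta> * v" "\<beta> - \<alpha> \<noteq> 0"
      using v be ne by (simp_all add: add_pos_pos)
    then show ?thesis
      unfolding HI_fst_via_snd_def ex1 ex2 by (intro cancel) simp_all
  qed
  ultimately show "u \<in> HI_fst_via_snd \<alpha> \<beta> v ` {x. 0 < x \<and> (\<alpha> * x * v - 1) * (\<beta> * x * v - 1) < 0}"
    using x by force
qed

lemma fst_HI_via_snd:
  fixes \<alpha> \<beta> x y :: real
  assumes al: "0 < \<alpha>" and be: "0 < \<beta>" and ne: "\<alpha> \<noteq> \<beta>" and x: "0 < x" and y: "0 < y"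
  shows "fst (HI \<alpha> \<beta> x y) = HI_fst_via_snd \<alpha> \<beta> (snd (HI \<alpha> \<beta> x y)) x"
proof -
  define P where "P = 1 + x + y + \<beta> * x * y"
  define D1 where "D1 = \<beta> + \<alpha> * x + \<beta> * y + \<alpha> * \<beta> * x * y"
  define D2 where "D2 = \<alpha> + \<alpha> * x + \<beta> * y + \<alpha> * \<beta> * x * y"
  have pos: "0 < P" "0 < D1" "0 < D2" "0 < 1 + x" "0 < 1 + \<alpha> * x"
    using HI_denominator_pos[OF al be x y] al x y be
    by (simp_all add: P_def D1_def D2_def add_pos_pos)
  have cancel: "((p * P / (x * D2)) * (k * q / D2)) / ((q * D1 / (x * D2)) * (y * k * p / D2)) = P / (y * D1)"
    if "0 < p" "0 < q" "k \<noteq> 0" for p q k :: real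
    using that x y pos by (simp add: field_simps)
  have "HI_fst_via_snd \<alpha> \<beta> (snd (HI \<alpha> \<beta> x y)) x
      = (((1 + \<alpha> * x) * P / (x * D2)) * ((\<beta> - \<alpha>) * (1 + x) / D2))
        / (((1 + x) * D1 / (x * D2)) * (y * (\<beta> - \<alpha>) * (1 + \<alpha> * x) / D2))"
    unfolding HI_fst_via_snd_def HI_snd_identities[OF al be x y] P_def D1_def D2_def ..
  also have "\<dots> = P / (y * D1)"
    using cancel[of "1 + \<alpha> * x" "1 + x" "\<beta> - \<alpha>"] pos ne by (simp add: mult.commute)
  finally show ?thesis
    by (simp add: HI_def P_def D1_def)
qed

lemma HI_kernel_identity:
  fixes \<alpha> \<beta> lam a b x y :: real
  assumes al: "0 < \<alpha>" and be: "0 < \<beta>" and x: "0 < x" and y: "0 < y"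
  defines "P \<equiv> 1 + x + y + \<beta> * x * y"
  defines "Q \<equiv> 1 + x + y + \<alpha> * x * y"
  defines "D1 \<equiv> \<beta> + \<alpha> * x + \<beta> * y + \<alpha> * \<beta> * x * y"
  defines "D2 \<equiv> \<alpha> + \<alpha> * x + \<beta> * y + \<alpha> * \<beta> * x * y"
  shows "gbp_kernel lam b a \<alpha> 1 (P / (y * D1)) * gbp_kernel (- lam) b a \<beta> 1 (Q / (x * D2)) * (P * Q / (x^2 * y^2 * D1 * D2))
       = gbp_kernel lam a b \<alpha> 1 x * gbp_kernel (- lam) a b \<beta> 1 y"
proof -
  have ax: "0 < \<alpha> * x" "0 < \<beta> * y" "0 < \<alpha> * x * y" "0 < \<beta> * x * y" "0 < \<alpha> * \<beta> * x * y"
    using al be x y by simp_all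
  have Pp: "0 < P" and Qp: "0 < Q" and D1p: "0 < D1" and D2p: "0 < D2"
    unfolding P_def Q_def D1_def D2_def using ax x y al be by linarith+
  have pp: "0 < 1 + x" "0 < 1 + y" "0 < 1 + \<alpha> * x" "0 < 1 + \<beta> * y" using x y ax by linarith+
  define u where "u = P / (y * D1)"
  define v where "v = Q / (x * D2)"
  have up: "0 < u" and vp: "0 < v" using Pp Qp D1p D2p x y by (simp_all add: u_def v_def)
  have f1: "y * D1 + \<alpha> * P = (1 + y) * D2" unfolding P_def D1_def D2_def by (simp add: algebra_simps)
  have f2: "P + y * D1 = (1 + \<beta> * y) * Q" unfolding P_def Q_def D1_def by (simp add: algebra_simps)
  have f3: "x * D2 + \<beta> * Q = (1 + x) * D1" unfolding Q_def D1_def D2_def by (simp add: algebra_simps)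
  have f4: "Q + x * D2 = (1 + \<alpha> * x) * P" unfolding P_def Q_def D2_def by (simp add: algebra_simps)
  have e1: "1 + \<alpha> * u = (1 + y) * D2 / (y * D1)"
  proof -
    have "1 + \<alpha> * u = (y * D1 + \<alpha> * P) / (y * D1)" unfolding u_def using y D1p by (simp add: field_simps)
    then show ?thesis by (simp only: f1)
  qed
  have e2: "1 + 1 / u = (1 + \<beta> * y) * Q / P"
  proof -
    have "1 + 1 / u = (P + y * D1) / P" unfolding u_def using y D1p Pp by (simp add: field_simps)
    then show ?thesis by (simp only: f2)
  qed
  have e3: "1 + \<beta> * v = (1 + x) * D1 / (x * D2)"
  proof -
    have "1 + \<beta> * v = (x * D2 + \<beta> * Q) / (x * D2)" unfolding v_def using x D2p by (simp add: field_simps)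
    then show ?thesis by (simp only: f3)
  qed
  have e4: "1 + 1 / v = (1 + \<alpha> * x) * P / Q"
  proof -
    have "1 + 1 / v = (Q + x * D2) / Q" unfolding v_def using x D2p Qp by (simp add: field_simps)
    then show ?thesis by (simp only: f4)
  qed
  have lu: "ln u = ln P - ln y - ln D1" unfolding u_def using y Pp D1p by (simp add: ln_div ln_mult)
  have lv: "ln v = ln Q - ln x - ln D2" unfolding v_def using x Qp D2p by (simp add: ln_div ln_mult)
  have l1: "ln (1 + \<alpha> * u) = ln (1 + y) + ln D2 - ln y - ln D1" unfolding e1 using y pp D1p D2p by (simp add: ln_div ln_mult)
  have l2: "ln (1 + 1 / u) = ln (1 + \<beta> * y) + ln Q - ln P" unfolding e2 using pp Pp Qp by (simp add: ln_div ln_mult)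
  have l3: "ln (1 + \<beta> * v) = ln (1 + x) + ln D1 - ln x - ln D2" unfolding e3 using x pp D1p D2p by (simp add: ln_div ln_mult)
  have l4: "ln (1 + 1 / v) = ln (1 + \<alpha> * x) + ln P - ln Q" unfolding e4 using pp Pp Qp by (simp add: ln_div ln_mult)
  have lx: "ln (1 + 1 / x) = ln (1 + x) - ln x"
  proof -
    have "1 + 1 / x = (1 + x) / x" using x by (simp add: field_simps)
    then show ?thesis using x pp by (simp add: ln_div)
  qed
  have ly: "ln (1 + 1 / y) = ln (1 + y) - ln y"
  proof -
    have "1 + 1 / y = (1 + y) / y" using y by (simp add: field_simps)
    then show ?thesis using y pp by (simp add: ln_div)
  qed
  have Jp: "0 < P * Q / (x^2 * y^2 * D1 * D2)" using Pp Qp D1p D2p x y by simp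
  have lJ: "ln (P * Q / (x^2 * y^2 * D1 * D2)) = ln P + ln Q - 2 * ln x - 2 * ln y - ln D1 - ln D2"
    using Pp Qp D1p D2p x y by (simp add: ln_div ln_mult ln_realpow)
  have p1: "0 < gbp_kernel lam b a \<alpha> 1 u" by (rule gbp_kernel_pos[OF up al]) simp
  have p2: "0 < gbp_kernel (- lam) b a \<beta> 1 v" by (rule gbp_kernel_pos[OF vp be]) simp
  have p3: "0 < gbp_kernel lam a b \<alpha> 1 x" by (rule gbp_kernel_pos[OF x al]) simp
  have p4: "0 < gbp_kernel (- lam) a b \<beta> 1 y" by (rule gbp_kernel_pos[OF y be]) simp
  have LN: "ln (gbp_kernel lam b a \<alpha> 1 u * gbp_kernel (- lam) b a \<beta> 1 v * (P * Q / (x^2 * y^2 * D1 * D2)))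
      = ln (gbp_kernel lam a b \<alpha> 1 x * gbp_kernel (- lam) a b \<beta> 1 y)"
    using p1 p2 p3 p4 Jp up vp x y al be
    apply (simp only: ln_mult_pos mult_pos_pos ln_gbp_kernel zero_less_one lJ)
    apply (simp only: lu l1 l2 lv l3 l4 lx ly)
    apply (simp add: algebra_simps add_divide_distrib diff_divide_distrib)
    done
  have "gbp_kernel lam b a \<alpha> 1 u * gbp_kernel (- lam) b a \<beta> 1 v * (P * Q / (x^2 * y^2 * D1 * D2))
      = gbp_kernel lam a b \<alpha> 1 x * gbp_kernel (- lam) a b \<beta> 1 y"
    by (rule ln_inj_iff[THEN iffD1, OF _ _ LN]) (use p1 p2 p3 p4 Jp in \<open>simp_all only: mult_pos_pos\<close>)
  then show ?thesis unfolding u_def v_def .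
qed

lemma HI_jacobian:
  fixes \<alpha> \<beta> x y :: real
  assumes al: "0 < \<alpha>" and be: "0 < \<beta>" and ne: "\<alpha> \<noteq> \<beta>" and x: "0 < x" and y: "0 < y"
  defines "v \<equiv> snd (HI \<alpha> \<beta> x y)"
  defines "P \<equiv> 1 + x + y + \<beta> * x * y" and "Q \<equiv> 1 + x + y + \<alpha> * x * y"
  defines "D1 \<equiv> \<beta> + \<alpha> * x + \<beta> * y + \<alpha> * \<beta> * x * y" and "D2 \<equiv> \<alpha> + \<alpha> * x + \<beta> * y + \<alpha> * \<beta> * x * y"
  shows "\<bar>v * (1 + v) * (1 + \<beta> * v) * (\<beta> - \<alpha>) / ((1 + \<beta> * v) * (1 - \<alpha> * v * x))^2\<bar>
      * \<bar>- (x * (1 + x) * (1 + \<alpha> * x) * (\<beta> - \<alpha>)) / (x * D2)^2\<bar> = P * Q / (x^2 * y^2 * D1 * D2)"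
proof -
  have pos: "0 < P" "0 < Q" "0 < D1" "0 < D2" "0 < 1 + x" "0 < 1 + \<alpha> * x"
    using HI_denominator_pos[OF al be x y] al be x y
    by (simp_all add: P_def Q_def D1_def D2_def add_pos_pos)
  have cancel: "(Q / (x * D2)) * (q * P / (x * D2)) * (p * D1 / (x * D2)) * k
      / ((p * D1 / (x * D2)) * (y * k * q / D2))^2 * (- (x * p * q * k) / (x * D2)^2)
      = - (P * Q / (x^2 * y^2 * D1 * D2))"
    if "0 < p" "0 < q" "k \<noteq> 0" for p q k :: real
    using that x y pos by (simp add: field_simps power2_eq_square)
  have v: "v = Q / (x * D2)"
    by (simp add: v_def Q_def D2_def snd_HI)
  have "v * (1 + v) * (1 + \<beta> * v) * (\<beta> - \<alpha>) / ((1 + \<beta> * v) * (1 - \<alpha> * v * x))^2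
      * (- (x * (1 + x) * (1 + \<alpha> * x) * (\<beta> - \<alpha>)) / (x * D2)^2)
    = (Q / (x * D2)) * ((1 + \<alpha> * x) * P / (x * D2)) * ((1 + x) * D1 / (x * D2)) * (\<beta> - \<alpha>)
      / (((1 + x) * D1 / (x * D2)) * (y * (\<beta> - \<alpha>) * (1 + \<alpha> * x) / D2))^2
      * (- (x * (1 + x) * (1 + \<alpha> * x) * (\<beta> - \<alpha>)) / (x * D2)^2)"
    unfolding v_def HI_snd_identities[OF al be x y] unfolding v_def[symmetric] v
    by (simp only: P_def D1_def D2_def)
  also have "\<dots> = - (P * Q / (x^2 * y^2 * D1 * D2))"
    using cancel[of "1 + x" "1 + \<alpha> * x" "\<beta> - \<alpha>"] pos ne by (simp add: mult_ac)
  finally have "v * (1 + v) * (1 + \<beta> * v) * (\<beta> - \<alpha>) / ((1 + \<beta> * v) * (1 - \<alpha> * v * x))^2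
      * (- (x * (1 + x) * (1 + \<alpha> * x) * (\<beta> - \<alpha>)) / (x * D2)^2) = - (P * Q / (x^2 * y^2 * D1 * D2))" .
  then show ?thesis
    unfolding abs_mult[symmetric] using pos x y by simp
qed

lemma nn_integral_HI_transfer_neq:
  fixes \<alpha> \<beta> lam a b :: real and C :: "(real \<times> real) set"
  assumes al: "0 < \<alpha>" and be: "0 < \<beta>" and ne: "\<alpha> \<noteq> \<beta>" and [measurable]: "C \<in> sets borel"
  shows "(\<integral>\<^sup>+z. ennreal (gbp_kernel lam a b \<alpha> 1 (fst z) * gbp_kernel (- lam) a b \<beta> 1 (snd z))
      * indicator C (HI \<alpha> \<beta> (fst z) (snd z)) \<partial>lborel) =
    (\<integral>\<^sup>+z. ennreal (gbp_kernel lam b a \<alpha> 1 (fst z) * gbp_kernel (- lam) b a \<beta> 1 (snd z))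
      * indicator C z \<partial>lborel)"
proof -
  let ?Q = "{z :: real \<times> real. 0 < fst z \<and> 0 < snd z}"
  let ?B = "{z :: real \<times> real. 0 < fst z \<and> 0 < snd z \<and> (\<alpha> * fst z * snd z - 1) * (\<beta> * fst z * snd z - 1) < 0}"
  let ?H = "\<lambda>x y. snd (HI \<alpha> \<beta> x y)"
  let ?H' = "\<lambda>x y. - (x * (1 + x) * (1 + \<alpha> * x) * (\<beta> - \<alpha>)) / (x * (\<alpha> + \<alpha> * x + \<beta> * y + \<alpha> * \<beta> * x * y))^2"
  let ?G = "HI_fst_via_snd \<alpha> \<beta>"
  let ?G' = "\<lambda>v x. v * (1 + v) * (1 + \<beta> * v) * (\<beta> - \<alpha>) / ((1 + \<beta> * v) * (1 - \<alpha> * v * x))^2"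
  have sliceQ: "{y. (x, y) \<in> ?Q} = (if 0 < x then {0<..} else {})"
      "{u. (u, v) \<in> ?Q} = (if 0 < v then {0<..} else {})" for x v :: real
    by auto
  have sliceB: "{v. (x, v) \<in> ?B} = (if 0 < x then {v. 0 < v \<and> (\<alpha> * x * v - 1) * (\<beta> * x * v - 1) < 0} else {})"
      "{x. (x, v) \<in> ?B} = (if 0 < v then {x. 0 < x \<and> (\<alpha> * x * v - 1) * (\<beta> * x * v - 1) < 0} else {})"
    for x v :: real
    by auto
  have mH: "(\<lambda>z. ?H (fst z) (snd z)) \<in> borel_measurable borel"
    unfolding HI_def by measurable
  have mG: "(\<lambda>z. ?G (snd z) (fst z)) \<in> borel_measurable borel"
    unfolding HI_fst_via_snd_def by measurable
  have derH: "(?H x has_real_derivative ?H' x y) (at y)" if "(x, y) \<in> ?Q" for x y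
    using that by (intro has_real_derivative_snd_HI al be) auto
  have injH: "inj_on (?H x) {y. (x, y) \<in> ?Q}" for x
    unfolding sliceQ(1) using al be ne by (simp add: inj_on_snd_HI)
  have imgH: "?H x ` {y. (x, y) \<in> ?Q} = {v. (x, v) \<in> ?B}" for x
    unfolding sliceQ(1) sliceB(1) using al be ne by (simp add: image_snd_HI)
  have derG: "(?G v has_real_derivative ?G' v x) (at x)" if "(x, v) \<in> ?B" for x v
  proof -
    have "\<alpha> * v * x \<noteq> 1"
      using that by (auto simp: mult_ac)
    then show ?thesis
      using that be by (simp add: has_real_derivative_HI_fst_via_snd)
  qed
  have injG: "inj_on (?G v) {x. (x, v) \<in> ?B}" for v
    unfolding sliceB(2) using be ne by (simp add: inj_on_HI_fst_via_snd)
  have imgG: "?G v ` {x. (x, v) \<in> ?B} = {u. (u, v) \<in> ?Q}" for v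
    unfolding sliceB(2) sliceQ(2) using al be ne by (simp add: image_HI_fst_via_snd)
  have jacobian: "gbp_kernel lam b a \<alpha> 1 (?G (?H x y) x) * gbp_kernel (- lam) b a \<beta> 1 (?H x y)
      * \<bar>?G' (?H x y) x\<bar> * \<bar>?H' x y\<bar> = gbp_kernel lam a b \<alpha> 1 x * gbp_kernel (- lam) a b \<beta> 1 y"
    if "(x, y) \<in> ?Q" for x y
  proof -
    have x: "0 < x" and y: "0 < y"
      using that by auto
    have "?G (?H x y) x = (1 + x + y + \<beta> * x * y) / (y * (\<beta> + \<alpha> * x + \<beta> * y + \<alpha> * \<beta> * x * y))"
      using fst_HI_via_snd[OF al be ne x y] by (simp add: HI_def)
    moreover have "?H x y = (1 + x + y + \<alpha> * x * y) / (x * (\<alpha> + \<alpha> * x + \<beta> * y + \<alpha> * \<beta> * x * y))"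
      by (rule snd_HI)
    ultimately show ?thesis
      using HI_kernel_identity[OF al be x y, of lam b a] HI_jacobian[OF al be ne x y] by (simp only: mult.assoc)
  qed
  have supp: "gbp_kernel lam a b \<alpha> 1 (fst z) * gbp_kernel (- lam) a b \<beta> 1 (snd z) = 0"
      "gbp_kernel lam b a \<alpha> 1 (fst z) * gbp_kernel (- lam) b a \<beta> 1 (snd z) = 0" if "z \<notin> ?Q" for z
  proof -
    have "fst z \<le> 0 \<or> snd z \<le> 0"
      using that by auto
    then show "gbp_kernel lam a b \<alpha> 1 (fst z) * gbp_kernel (- lam) a b \<beta> 1 (snd z) = 0"
        "gbp_kernel lam b a \<alpha> 1 (fst z) * gbp_kernel (- lam) b a \<beta> 1 (snd z) = 0"
      by (auto simp only: gbp_kernel_nonpos_arg mult_zero_left mult_zero_right)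
  qed
  show ?thesis
  proof (rule nn_integral_kernel_transfer_triangular[where B = ?B and H = ?H and H' = ?H' and G = ?G and G' = ?G'])
    show "HI \<alpha> \<beta> x y = (?G (?H x y) x, ?H x y)" if "(x, y) \<in> ?Q" for x y
      using that al be ne by (simp add: prod_eq_iff fst_HI_via_snd)
  qed (fact derH injH imgH derG injG imgG jacobian supp mH mG
      gbp_kernel_nonneg[OF less_imp_le[OF al] zero_le_one] gbp_kernel_nonneg[OF less_imp_le[OF be] zero_le_one]
    | simp)+
qed

lemma HI_diagonal:
  fixes \<alpha> x y :: real
  assumes "0 < \<alpha>" "0 < x" "0 < y"
  shows "HI \<alpha> \<alpha> x y = (1 / (\<alpha> * y), 1 / (\<alpha> * x))"
proof -
  have "\<alpha> + \<alpha> * x + \<alpha> * y + \<alpha> * \<alpha> * x * y = \<alpha> * (1 + x + y + \<alpha> * x * y)"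
    by (simp add: algebra_simps)
  moreover have "0 < 1 + x + y + \<alpha> * x * y"
    using assms by (simp add: add_pos_pos)
  ultimately show ?thesis
    using assms by (simp add: HI_def)
qed

lemma nn_integral_HI_transfer_diagonal:
  fixes \<alpha> lam a b :: real and C :: "(real \<times> real) set"
  assumes al: "0 < \<alpha>" and [measurable]: "C \<in> sets borel"
  shows "(\<integral>\<^sup>+z. ennreal (gbp_kernel lam a b \<alpha> 1 (fst z) * gbp_kernel (- lam) a b \<alpha> 1 (snd z))
      * indicator C (HI \<alpha> \<alpha> (fst z) (snd z)) \<partial>lborel) =
    (\<integral>\<^sup>+z. ennreal (gbp_kernel lam b a \<alpha> 1 (fst z) * gbp_kernel (- lam) b a \<alpha> 1 (snd z))
      * indicator C z \<partial>lborel)"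
proof -
  let ?Q = "{z :: real \<times> real. 0 < fst z \<and> 0 < snd z}"
  let ?inv = "\<lambda>t :: real. 1 / (\<alpha> * t)"
  let ?inv' = "\<lambda>t :: real. - 1 / (\<alpha> * t^2)"
  have [measurable]: "(\<lambda>z. HI \<alpha> \<alpha> (fst z) (snd z)) \<in> borel_measurable borel"
    unfolding HI_def by measurable
  have sliceQ: "{y. (x, y) \<in> ?Q} = (if 0 < x then {0<..} else {})"
      "{u. (u, v) \<in> ?Q} = (if 0 < v then {0<..} else {})" for x v :: real
    by auto
  have der: "(?inv has_real_derivative ?inv' t) (at t)" if "t \<noteq> 0" for t
    using that al by (auto intro!: derivative_eq_intros simp: power2_eq_square field_simps)
  have inj: "inj_on ?inv {0<..}"
    using al by (auto intro!: inj_onI)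
  have img: "?inv ` {0<..} = {0<..}"
  proof (intro equalityI subsetI)
    fix w :: real assume "w \<in> {0<..}"
    then have "w = ?inv (?inv w)" "0 < ?inv w"
      using al by simp_all
    then show "w \<in> ?inv ` {0<..}"
      by blast
  qed (use al in auto)
  have "(\<integral>\<^sup>+z. ennreal (gbp_kernel lam a b \<alpha> 1 (fst z) * gbp_kernel (- lam) a b \<alpha> 1 (snd z))
      * indicator C (HI \<alpha> \<alpha> (fst z) (snd z)) \<partial>lborel) =
    (\<integral>\<^sup>+z. ennreal (gbp_kernel (- lam) a b \<alpha> 1 (fst z) * gbp_kernel lam a b \<alpha> 1 (snd z))
      * indicator C (HI \<alpha> \<alpha> (snd z) (fst z)) \<partial>lborel)"
    by (subst nn_integral_swap_lborel) (simp_all add: mult.commute)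
  also have "\<dots> = (\<integral>\<^sup>+z. ennreal (gbp_kernel lam b a \<alpha> 1 (fst z) * gbp_kernel (- lam) b a \<alpha> 1 (snd z))
      * indicator C z \<partial>lborel)"
  proof (rule nn_integral_kernel_transfer_triangular[where B = ?Q and H = "\<lambda>x. ?inv" and H' = "\<lambda>x. ?inv'"
        and G = "\<lambda>v. ?inv" and G' = "\<lambda>v. ?inv'" and T = "\<lambda>x y. HI \<alpha> \<alpha> y x"])
    show "HI \<alpha> \<alpha> y x = (?inv x, ?inv y)" if "(x, y) \<in> ?Q" for x y
      using that al by (simp add: HI_diagonal)
    show "gbp_kernel lam b a \<alpha> 1 (?inv x) * gbp_kernel (- lam) b a \<alpha> 1 (?inv y) * \<bar>?inv' x\<bar> * \<bar>?inv' y\<bar>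
        = gbp_kernel (- lam) a b \<alpha> 1 x * gbp_kernel lam a b \<alpha> 1 y" if "(x, y) \<in> ?Q" for x y
    proof -
      have x: "0 < x" and y: "0 < y"
        using that by auto
      define P where "P = 1 + y + x + \<alpha> * y * x"
      have P: "0 < P"
        using x y al by (simp add: P_def add_pos_pos)
      have D: "\<alpha> + \<alpha> * y + \<alpha> * x + \<alpha> * \<alpha> * y * x = \<alpha> * P"
        by (simp add: P_def algebra_simps)
      have identity: "gbp_kernel lam b a \<alpha> 1 (P / (x * (\<alpha> * P))) * gbp_kernel (- lam) b a \<alpha> 1 (P / (y * (\<alpha> * P)))
          * (P * P / (y^2 * x^2 * (\<alpha> * P) * (\<alpha> * P))) = gbp_kernel lam a b \<alpha> 1 y * gbp_kernel (- lam) a b \<alpha> 1 x"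
        using HI_kernel_identity[OF al al y x, of lam b a] unfolding D P_def[symmetric] .
      have "P / (x * (\<alpha> * P)) = ?inv x" "P / (y * (\<alpha> * P)) = ?inv y"
          "P * P / (y^2 * x^2 * (\<alpha> * P) * (\<alpha> * P)) = \<bar>?inv' x\<bar> * \<bar>?inv' y\<bar>"
        using P al x y by (simp_all add: power2_eq_square field_simps)
      then show ?thesis
        using identity by (simp add: mult_ac)
    qed
  qed (use al der inj img sliceQ in \<open>auto simp: gbp_kernel_nonneg gbp_kernel_nonpos_arg\<close>)
  finally show ?thesis .
qed

lemma (in prob_space) indep_var_HI_image:
  fixes \<alpha> \<beta> lam a b :: real and X Y :: "'a \<Rightarrow> real"
  assumes al: "0 < \<alpha>" and be: "0 < \<beta>"
    and X: "distributed M lborel X (normalized_density (gbp_kernel lam a b \<alpha> 1))"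
    and Y: "distributed M lborel Y (normalized_density (gbp_kernel (- lam) a b \<beta> 1))"
    and indep: "indep_var borel X borel Y"
  shows "indep_var borel (\<lambda>\<omega>. fst (HI \<alpha> \<beta> (X \<omega>) (Y \<omega>))) borel (\<lambda>\<omega>. snd (HI \<alpha> \<beta> (X \<omega>) (Y \<omega>))) \<and>
    distributed M lborel (\<lambda>\<omega>. fst (HI \<alpha> \<beta> (X \<omega>) (Y \<omega>))) (normalized_density (gbp_kernel lam b a \<alpha> 1)) \<and>
    distributed M lborel (\<lambda>\<omega>. snd (HI \<alpha> \<beta> (X \<omega>) (Y \<omega>))) (normalized_density (gbp_kernel (- lam) b a \<beta> 1))"
proof (rule indep_var_of_kernel_transfer)
  show "(\<lambda>z. HI \<alpha> \<beta> (fst z) (snd z)) \<in> borel_measurable borel"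
    unfolding HI_def by measurable
  fix C :: "(real \<times> real) set"
  assume C: "C \<in> sets borel"
  show "(\<integral>\<^sup>+z. ennreal (gbp_kernel lam a b \<alpha> 1 (fst z) * gbp_kernel (- lam) a b \<beta> 1 (snd z))
      * indicator C (HI \<alpha> \<beta> (fst z) (snd z)) \<partial>lborel) =
    (\<integral>\<^sup>+z. ennreal (gbp_kernel lam b a \<alpha> 1 (fst z) * gbp_kernel (- lam) b a \<beta> 1 (snd z))
      * indicator C z \<partial>lborel)"
    using nn_integral_HI_transfer_neq[OF al be _ C] nn_integral_HI_transfer_diagonal[OF al C]
    by (cases "\<alpha> = \<beta>") auto
qed (use al be X Y indep in \<open>simp_all add: gbp_kernel_nonneg\<close>)

lemma (in prob_space) indep_var_FBe_image:
  fixes \<delta> lam a b :: real and X Y :: "'a \<Rightarrow> real"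
  assumes d: "0 < \<delta>"
    and X: "distributed M lborel X (normalized_density (gbp_kernel lam a b \<delta> 1))"
    and Y: "distributed M lborel Y (normalized_density (bp_kernel (b - lam / 2) lam))"
    and indep: "indep_var borel X borel Y"
  shows "indep_var borel (\<lambda>\<omega>. fst (FBe \<delta> (X \<omega>) (Y \<omega>))) borel (\<lambda>\<omega>. snd (FBe \<delta> (X \<omega>) (Y \<omega>))) \<and>
    distributed M lborel (\<lambda>\<omega>. fst (FBe \<delta> (X \<omega>) (Y \<omega>))) (normalized_density (gbp_kernel lam b a \<delta> 1)) \<and>
    distributed M lborel (\<lambda>\<omega>. snd (FBe \<delta> (X \<omega>) (Y \<omega>))) (normalized_density (bp_kernel (a - lam / 2) lam))"
proof (rule indep_var_of_kernel_transfer)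
  show "(\<lambda>z. FBe \<delta> (fst z) (snd z)) \<in> borel_measurable borel"
    unfolding FBe_def by measurable
  show "(\<integral>\<^sup>+z. ennreal (gbp_kernel lam a b \<delta> 1 (fst z) * bp_kernel (b - lam / 2) lam (snd z))
      * indicator C (FBe \<delta> (fst z) (snd z)) \<partial>lborel) =
    (\<integral>\<^sup>+z. ennreal (gbp_kernel lam b a \<delta> 1 (fst z) * bp_kernel (a - lam / 2) lam (snd z))
      * indicator C z \<partial>lborel)" if "C \<in> sets borel" for C
    using d that by (rule nn_integral_FBe_transfer)
qed (use d X Y indep in \<open>simp_all add: gbp_kernel_nonneg bp_kernel_nonneg\<close>)

theorem corollary5p2:
  fixes M :: "'s measure"
  assumes "prob_space M"
  shows
   "(\<forall>(\<alpha>::real) (\<beta>::real) (lam::real) (a::real) (b::real) (X::'s \<Rightarrow> real) (Y::'s \<Rightarrow> real).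
      0 < \<alpha> \<and> 0 < \<beta> \<and> 0 < a \<and> 0 < b \<and>
      - min a b < lam / 2 \<and> lam / 2 < min a b \<and>
      distributed M lborel X (gbp_density lam a b \<alpha> 1) \<and>
      distributed M lborel Y (gbp_density (- lam) a b \<beta> 1) \<and>
      prob_space.indep_var M borel X borel Y
      \<longrightarrow>
      (let U = (\<lambda>\<omega>. fst (HI \<alpha> \<beta> (X \<omega>) (Y \<omega>)));
           V = (\<lambda>\<omega>. snd (HI \<alpha> \<beta> (X \<omega>) (Y \<omega>)))
       in prob_space.indep_var M borel U borel V \<and>
          distributed M lborel U (gbp_density lam b a \<alpha> 1) \<and>
          distributed M lborel V (gbp_density (- lam) b a \<beta> 1)))
   \<and>
   (\<forall>(\<delta>::real) (lam::real) (a::real) (b::real) (X::'s \<Rightarrow> real) (Y::'s \<Rightarrow> real).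
      0 < \<delta> \<and> 0 < a \<and> 0 < b \<and>
      0 < lam / 2 \<and> lam / 2 < min a b \<and>
      distributed M lborel X (gbp_density lam a b \<delta> 1) \<and>
      distributed M lborel Y (bp_density (b - lam / 2) lam) \<and>
      prob_space.indep_var M borel X borel Y
      \<longrightarrow>
      (let U = (\<lambda>\<omega>. fst (FBe \<delta> (X \<omega>) (Y \<omega>)));
           V = (\<lambda>\<omega>. snd (FBe \<delta> (X \<omega>) (Y \<omega>)))
       in prob_space.indep_var M borel U borel V \<and>
          distributed M lborel U (gbp_density lam b a \<delta> 1) \<and>
          distributed M lborel V (bp_density (a - lam / 2) lam)))"
proof -
  interpret prob_space M
    by fact
  show ?thesis
    unfolding Let_def gbp_density_eq_normalized bp_density_eq_normalized
    using indep_var_HI_image indep_var_FBe_image by blast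
qed

end
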